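(* Any integrable complex structure $J$ on $\mathfrak{n}\times\mathfrak{n}$ is equivalent under some first kind automorphism to one of the following (matrices in the basis $(x_1,\dots,x_6)$): (i) $\tilde{S}_\varepsilon(\xi^5_5)=\begin{pmatrix} 0&-1&0&0&0&0\\ 1&0&0&0&0&0\\ 0&0&0&-1&0&0\\ 0&0&1&0&0&0\\ 0&0&0&0&\xi^5_5&-\varepsilon((\xi^5_5)^2+1)\\ 0&0&0&0&\varepsilon&-\xi^5_5 \end{pmatrix}$, $\varepsilon=\pm1$, $\xi^5_5\in\mathbb{R}$. $\tilde{S}_{\varepsilon'}({\xi'}^5_5)$ is equivalent to $\tilde{S}_\varepsilon(\xi^5_5)$ under some first (resp. second) kind automorphism if and only if $\varepsilon'=\varepsilon$, ${\xi'}^5_5=\xi^5_5$ (resp. $\varepsilon'=-\varepsilon$, ${\xi'}^5_5=-\xi^5_5$). (ii) $\tilde{D}(\xi^1_1)=\begin{pmatrix} \xi^1_1&0&-((\xi^1_1)^2+1)&0&0&0\\ 0&\xi^1_1&0&-((\xi^1_1)^2+1)&0&0\\ 1&0&-\xi^1_1&0&0&0\\ 0&1&0&-\xi^1_1&0&0\\ 0&0&0&0&\frac{(\xi^1_1)^2-1}{2\xi^1_1}&-\frac{((\xi^1_1)^2+1)^2}{2\xi^1_1}\\ 0&0&0&0&\frac{1}{2\xi^1_1}&\frac{1-(\xi^1_1)^2}{2\xi^1_1} \end{pmatrix}$, $\xi^1_1\in\mathbb{R}\setminus\{0\}$. $\tilde{D}({\xi'}^1_1)$ is equivalent to $\tilde{D}(\xi^1_1)$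 under some first (resp. second) kind automorphism if and only if ${\xi'}^1_1=\xi^1_1$ (resp. ${\xi'}^1_1=-\xi^1_1$). (iii) $\tilde{T}(\xi^3_3,\xi^4_3)=\begin{pmatrix} 0&-\xi^4_3\xi^3_3&-\xi^4_3\xi^3_3&\xi^4_3\xi^3_3-1&0&0\\ 1&-\xi^3_3&-\frac{(\xi^3_3)^2+1-\xi^4_3\xi^3_3}{\xi^3_3}&\xi^3_3&0&0\\ 0&\xi^3_3&\xi^3_3&-\xi^3_3&0&0\\ 1&0&\xi^4_3&0&0&0\\ 0&0&0&0&-\frac{\xi^4_3\xi^3_3-1}{\xi^3_3}&-\frac{(\xi^4_3\xi^3_3-2)\xi^4_3\xi^3_3+(\xi^3_3)^2+1}{(\xi^3_3)^2}\\ 0&0&0&0&1&\frac{\xi^4_3\xi^3_3-1}{\xi^3_3} \end{pmatrix}$, $\xi^3_3\in\mathbb{R}\setminus\{0\}$, $\xi^4_3\in\mathbb{R}$. $\tilde{T}({\xi'}^3_3,{\xi'}^4_3)$ is equivalent to $\tilde{T}(\xi^3_3,\xi^4_3)$ under some first (resp. second) kind automorphism if and only if ${\xi'}^3_3=\xi^3_3$, ${\xi'}^4_3=\xi^4_3$ (resp. ${\xi'}^3_3=-\xi^3_3$, ${\xi'}^4_3=-\xi^4_3$). Finally, the cases (i), (ii), (iii) are mutually non equivalent, either under first or second kind automorphism.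
   Context: $\mathfrak{n}\times\mathfrak{n}$ is the direct product of two copies of the real 3-dimensional Heisenberg Lie algebra, with basis $(x_1,\dots,x_6)$ and nonzero commutation relations $[x_1,x_2]=x_5$, $[x_3,x_4]=x_6$. An integrable complex structure is a linear map $J$ with $J^2=-1$ and $[JX,JY]-[X,Y]-J[JX,Y]-J[X,JY]=0$ for all $X,Y$. First kind automorphisms are the matrices $\Phi$ (in this basis) with upper-left $4\times4$ block $\mathrm{diag}(B_1,B_2)$, $B_1=\begin{pmatrix} b^1_1&b^1_2\\ b^2_1&b^2_2\end{pmatrix}$, $B_2=\begin{pmatrix} b^3_3&b^3_4\\ b^4_3&b^4_4\end{pmatrix}$, zero upper-right $4\times2$ block, arbitrary lower-left $2\times4$ block, and lower-right block $\mathrm{diag}(\det B_1,\det B_2)$, with $\det B_1\det B_2\neq0$. Second kind automorphisms are $\Theta\Phi$ with $\Phi$ first kind and $\Theta$ the switch $x_1\leftrightarrow x_3$, $x_2\leftrightarrow x_4$, $x_5\leftrightarrow x_6$. Equivalence means conjugation $J\mapsto \Phi J\Phi^{-1}$ by such an automorphism. *)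

theory Defs
  imports "Jordan_Normal_Form.Matrix" "Jordan_Normal_Form.Determinant"
begin

text \<open>Matrices/vectors are indexed 0..5; index k corresponds to the paper's x_(k+1).
  Column j of a matrix is the image of the basis vector x_(j+1).\<close>

definition nbr :: "real vec \<Rightarrow> real vec \<Rightarrow> real vec" where
  "nbr X Y = vec 6 (\<lambda>i. if i = 4 then X$0 * Y$1 - X$1 * Y$0
                         else if i = 5 then X$2 * Y$3 - X$3 * Y$2 else 0)"

definition integrable_cx :: "real mat \<Rightarrow> bool" where
  "integrable_cx J \<longleftrightarrow> J \<in> carrier_mat 6 6 \<and> J * J = - 1\<^sub>m 6 \<and>
     (\<forall>X \<in> carrier_vec 6. \<forall>Y \<in> carrier_vec 6.
        nbr (J *\<^sub>v X) (J *\<^sub>v Y) - nbr X Y - J *\<^sub>v nbr (J *\<^sub>v X) Y - J *\<^sub>v nbr X (J *\<^sub>v Y)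
          = 0\<^sub>v 6)"

definition first_kind :: "real mat \<Rightarrow> bool" where
  "first_kind P \<longleftrightarrow> P \<in> carrier_mat 6 6 \<and>
     (\<forall>i<4. \<forall>j<6. 4 \<le> j \<longrightarrow> P $$ (i,j) = 0) \<and>
     (\<forall>i<2. \<forall>j<4. 2 \<le> j \<longrightarrow> P $$ (i,j) = 0 \<and> P $$ (j,i) = 0) \<and>
     P $$ (4,4) = P $$ (0,0) * P $$ (1,1) - P $$ (0,1) * P $$ (1,0) \<and>
     P $$ (5,5) = P $$ (2,2) * P $$ (3,3) - P $$ (2,3) * P $$ (3,2) \<and>
     P $$ (4,5) = 0 \<and> P $$ (5,4) = 0 \<and>
     (P $$ (0,0) * P $$ (1,1) - P $$ (0,1) * P $$ (1,0)) *
     (P $$ (2,2) * P $$ (3,3) - P $$ (2,3) * P $$ (3,2)) \<noteq> 0"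

definition Theta :: "real mat" where
  "Theta = mat_of_rows_list 6
    [[0,0,1,0,0,0],[0,0,0,1,0,0],[1,0,0,0,0,0],[0,1,0,0,0,0],[0,0,0,0,0,1],[0,0,0,0,1,0]]"

definition second_kind :: "real mat \<Rightarrow> bool" where
  "second_kind P \<longleftrightarrow> (\<exists>F. first_kind F \<and> P = Theta * F)"

definition equiv_by :: "real mat \<Rightarrow> real mat \<Rightarrow> real mat \<Rightarrow> bool" where
  "equiv_by P J J' \<longleftrightarrow> (\<exists>Q \<in> carrier_mat 6 6. P * Q = 1\<^sub>m 6 \<and> Q * P = 1\<^sub>m 6 \<and>
       J' = P * J * Q)"

definition first_equiv :: "real mat \<Rightarrow> real mat \<Rightarrow> bool" where
  "first_equiv J J' \<longleftrightarrow> (\<exists>P. first_kind P \<and> equiv_by P J J')"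

definition second_equiv :: "real mat \<Rightarrow> real mat \<Rightarrow> bool" where
  "second_equiv J J' \<longleftrightarrow> (\<exists>P. second_kind P \<and> equiv_by P J J')"

definition S_t :: "real \<Rightarrow> real \<Rightarrow> real mat" where
  "S_t e x = mat_of_rows_list 6
    [[0,-1,0,0,0,0],[1,0,0,0,0,0],[0,0,0,-1,0,0],[0,0,1,0,0,0],
     [0,0,0,0,x,-e*(x^2+1)],[0,0,0,0,e,-x]]"

definition D_t :: "real \<Rightarrow> real mat" where
  "D_t x = mat_of_rows_list 6
    [[x,0,-(x^2+1),0,0,0],[0,x,0,-(x^2+1),0,0],[1,0,-x,0,0,0],[0,1,0,-x,0,0],
     [0,0,0,0,(x^2-1)/(2*x),-((x^2+1)^2)/(2*x)],[0,0,0,0,1/(2*x),(1-x^2)/(2*x)]]"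

text \<open>T_t a b with a = xi^3_3, b = xi^4_3.\<close>
definition T_t :: "real \<Rightarrow> real \<Rightarrow> real mat" where
  "T_t a b = mat_of_rows_list 6
    [[0,-b*a,-b*a,b*a-1,0,0],
     [1,-a,-(a^2+1-b*a)/a,a,0,0],
     [0,a,a,-a,0,0],
     [1,0,b,0,0,0],
     [0,0,0,0,-(b*a-1)/a,-((b*a-2)*b*a+a^2+1)/(a^2)],
     [0,0,0,0,1,(b*a-1)/a]]"

definition S_fam :: "real mat set" where
  "S_fam = {S_t e x | e x. e \<in> {1,-1}}"
definition D_fam :: "real mat set" where
  "D_fam = {D_t x | x. x \<noteq> 0}"
definition T_fam :: "real mat set" where
  "T_fam = {T_t a b | a b. a \<noteq> 0}"

end

theory Submission
  imports Defs
begin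

text \<open>
  Integrability forces the centre span(x5,x6) to be J-invariant, so J is block lower triangular for
  the splitting span(x1..x4) \<oplus> centre, with blocks [P Q; R S] on top, a complex structure Z on the
  centre, and the Nijenhuis tensor reduces to four scalar relations between det, tr of P, Q, R, S and
  the entries of Z. A first kind automorphism acts on the top by conjugation with diag(B1,B2) and on Z
  by diag(det B1, det B2), and its free lower left part can always absorb the lower left blocks of J.
  If tr S = 0 then Q = R = 0, P and S are complex structures of the plane and conjugate to a rotation;
  a positive rescaling leaves the sign of one entry of Z, giving the family S. If tr S \<noteq> 0 then Q is
  invertible and J is determined up to equivalence by the conjugacy class of S: a scalar S gives the
  family D, a cyclic S (in companion form) the family T. The swap Theta exchanges the two planes, and
  the families are told apart by whether det Q det R = 0 and whether P and S are scalar.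
\<close>

section \<open>Real 2\<times>2 matrices\<close>

text \<open>The 6\<times>6 matrices are handled through their 2\<times>2 blocks; for this concrete ring of 2\<times>2
  matrices, simp decides identities entrywise.\<close>

datatype mat2 = Mat2 real real real real

instantiation mat2 :: ring_1
begin
fun plus_mat2 :: "mat2 \<Rightarrow> mat2 \<Rightarrow> mat2" where
  "plus_mat2 (Mat2 a b c d) (Mat2 e f g h) = Mat2 (a+e) (b+f) (c+g) (d+h)"
fun minus_mat2 :: "mat2 \<Rightarrow> mat2 \<Rightarrow> mat2" where
  "minus_mat2 (Mat2 a b c d) (Mat2 e f g h) = Mat2 (a-e) (b-f) (c-g) (d-h)"
fun uminus_mat2 :: "mat2 \<Rightarrow> mat2" where
  "uminus_mat2 (Mat2 a b c d) = Mat2 (-a) (-b) (-c) (-d)"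
definition zero_mat2 :: mat2 where "zero_mat2 = Mat2 0 0 0 0"
definition one_mat2 :: mat2 where "one_mat2 = Mat2 1 0 0 1"
fun times_mat2 :: "mat2 \<Rightarrow> mat2 \<Rightarrow> mat2" where
  "times_mat2 (Mat2 a b c d) (Mat2 e f g h) = Mat2 (a*e+b*g) (a*f+b*h) (c*e+d*g) (c*f+d*h)"
instance proof
  fix a b c :: mat2
  show "a + b + c = a + (b + c)" by (cases a; cases b; cases c) simp
  show "a + b = b + a" by (cases a; cases b) simp
  show "0 + a = a" by (cases a) (simp add: zero_mat2_def)
  show "- a + a = 0" by (cases a) (simp add: zero_mat2_def)
  show "a - b = a + - b" by (cases a; cases b) simp
  show "a * b * c = a * (b * c)" by (cases a; cases b; cases c) (simp add: algebra_simps)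
  show "(a + b) * c = a * c + b * c" by (cases a; cases b; cases c) (simp add: algebra_simps)
  show "a * (b + c) = a * b + a * c" by (cases a; cases b; cases c) (simp add: algebra_simps)
  show "1 * a = a" by (cases a) (simp add: one_mat2_def)
  show "a * 1 = a" by (cases a) (simp add: one_mat2_def)
  show "(0::mat2) \<noteq> 1" by (simp add: zero_mat2_def one_mat2_def)
qed
end

fun det2 :: "mat2 \<Rightarrow> real" where "det2 (Mat2 a b c d) = a*d - b*c"
fun tr2 :: "mat2 \<Rightarrow> real" where "tr2 (Mat2 a b c d) = a + d"
fun smult2 :: "real \<Rightarrow> mat2 \<Rightarrow> mat2" where
  "smult2 k (Mat2 a b c d) = Mat2 (k*a) (k*b) (k*c) (k*d)"
fun inv2 :: "mat2 \<Rightarrow> mat2" where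
  "inv2 (Mat2 a b c d) = smult2 (1 / (a*d - b*c)) (Mat2 d (-b) (-c) a)"

definition is_scalar2 :: "mat2 \<Rightarrow> bool" where
  "is_scalar2 X \<longleftrightarrow> (\<exists>c. X = Mat2 c 0 0 c)"

definition rot :: mat2 where "rot = Mat2 0 (-1) 1 0"
definition swap2 :: mat2 where "swap2 = Mat2 0 1 1 0"

lemma det2_mult: "det2 (X * Y) = det2 X * det2 Y"
  by (cases X; cases Y) (simp add: algebra_simps)

lemma tr2_mult_commute: "tr2 (X * Y) = tr2 (Y * X)"
  by (cases X; cases Y) (simp add: algebra_simps)

lemma det2_one [simp]: "det2 1 = 1"
  by (simp add: one_mat2_def)

lemma det2_zero [simp]: "det2 0 = 0"
  by (simp add: zero_mat2_def)

lemma det2_uminus [simp]: "det2 (- X) = det2 X"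
  by (cases X) simp

lemma tr2_uminus [simp]: "tr2 (- X) = - tr2 X"
  by (cases X) simp

lemma smult2_one [simp]: "smult2 1 X = X"
  by (cases X) simp

lemma smult2_zero [simp]: "smult2 0 X = 0"
  by (cases X) (simp add: zero_mat2_def)

lemma smult2_mult_left: "smult2 k X * Y = smult2 k (X * Y)"
  by (cases X; cases Y) (simp add: algebra_simps)

lemma smult2_mult_right: "X * smult2 k Y = smult2 k (X * Y)"
  by (cases X; cases Y) (simp add: algebra_simps)

lemma smult2_add_left: "smult2 k X + smult2 l X = smult2 (k + l) X"
  by (cases X) (simp add: algebra_simps)

lemma smult2_add_right: "smult2 k X + smult2 k Y = smult2 k (X + Y)"
  by (cases X; cases Y) (simp add: algebra_simps)

lemma smult2_uminus_right: "smult2 k (- X) = smult2 (- k) X"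
  by (cases X) simp

lemma det2_smult2: "det2 (smult2 k X) = k^2 * det2 X"
  by (cases X) (simp add: algebra_simps power2_eq_square)

lemma scalar2_mult_commute: "Mat2 c 0 0 c * X = X * Mat2 c 0 0 c"
  by (cases X) (simp add: algebra_simps)

lemma inv2_right: "det2 X \<noteq> 0 \<Longrightarrow> X * inv2 X = 1"
  by (cases X) (simp add: one_mat2_def divide_simps)

lemma inv2_left: "det2 X \<noteq> 0 \<Longrightarrow> inv2 X * X = 1"
  by (cases X) (simp add: one_mat2_def divide_simps)

lemma inv2_left_mult: "det2 X \<noteq> 0 \<Longrightarrow> inv2 X * (X * Y) = Y"
  by (metis inv2_left mult.assoc mult_1_left)

lemma det2_inv2: "det2 X \<noteq> 0 \<Longrightarrow> det2 (inv2 X) = 1 / det2 X"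
  by (cases X) (simp add: divide_simps power2_eq_square)

lemma mult2_right_cancel: "det2 Q \<noteq> 0 \<Longrightarrow> X * Q = Y * Q \<Longrightarrow> X = Y"
  by (metis inv2_right mult.assoc mult_1_right)

lemma mult2_left_cancel: "det2 Q \<noteq> 0 \<Longrightarrow> Q * X = Q * Y \<Longrightarrow> X = Y"
  by (metis inv2_left mult.assoc mult_1_left)

lemma conj2_by_inv2:
  assumes "det2 V \<noteq> 0" "X * V = V * Y"
  shows "inv2 V * X = Y * inv2 V"
proof -
  have "inv2 V * X = inv2 V * X * (V * inv2 V)" using assms(1) by (simp add: inv2_right)
  also have "\<dots> = inv2 V * (X * V) * inv2 V" by (simp add: mult.assoc)
  also have "\<dots> = Y * inv2 V" using assms by (simp add: mult.assoc inv2_left_mult)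
  finally show ?thesis .
qed

lemma cayley_hamilton2: "X * X = smult2 (tr2 X) X - smult2 (det2 X) 1"
  by (cases X) (simp add: one_mat2_def algebra_simps)

lemma similar2_det_tr:
  assumes "det2 B \<noteq> 0" "B * X = Y * B"
  shows "det2 X = det2 Y" "tr2 X = tr2 Y"
proof -
  have "det2 B * det2 X = det2 Y * det2 B" using assms(2) by (metis det2_mult)
  then show "det2 X = det2 Y" using assms(1) by simp
  have "Y = B * X * inv2 B" using assms by (metis inv2_right mult.assoc mult_1_right)
  then have "tr2 Y = tr2 (inv2 B * (B * X))" by (metis tr2_mult_commute mult.assoc)
  then show "tr2 X = tr2 Y" using assms(1) by (simp add: inv2_left_mult)
qed

lemma similar2_is_scalar2:
  assumes "det2 B \<noteq> 0" "B * X = Y * B"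
  shows "is_scalar2 X \<longleftrightarrow> is_scalar2 Y"
proof
  assume "is_scalar2 X"
  then obtain c where "X = Mat2 c 0 0 c" by (auto simp: is_scalar2_def)
  then have "Mat2 c 0 0 c * B = Y * B" using assms(2) by (simp add: scalar2_mult_commute)
  then show "is_scalar2 Y" using mult2_right_cancel[OF assms(1)] by (auto simp: is_scalar2_def)
next
  assume "is_scalar2 Y"
  then obtain c where "Y = Mat2 c 0 0 c" by (auto simp: is_scalar2_def)
  then have "B * X = B * Mat2 c 0 0 c" using assms(2) by (simp add: scalar2_mult_commute)
  then show "is_scalar2 X" using mult2_left_cancel[OF assms(1)] by (auto simp: is_scalar2_def)
qed

lemma non_scalar2_cyclic:
  assumes "\<not> is_scalar2 S"
  shows "\<exists>W. det2 W \<noteq> 0 \<and> S * W = W * Mat2 0 (- det2 S) 1 (tr2 S)"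
proof (cases S)
  case (Mat2 s1 s2 s3 s4)
  define w1 :: real where "w1 = (if s3 \<noteq> 0 then 1 else if s2 \<noteq> 0 then 0 else 1)"
  define w2 :: real where "w2 = (if s3 \<noteq> 0 then 0 else 1)"
  \<comment> \<open>the columns are a cyclic vector w and S w\<close>
  define W where "W = Mat2 w1 (s1*w1 + s2*w2) w2 (s3*w1 + s4*w2)"
  have "det2 W \<noteq> 0" using assms Mat2 by (auto simp: W_def w1_def w2_def is_scalar2_def algebra_simps)
  moreover have "S * W = W * Mat2 0 (- det2 S) 1 (tr2 S)"
    by (simp add: Mat2 W_def algebra_simps)
  ultimately show ?thesis by blast
qed

lemma complex_structure2_entries:
  assumes "Mat2 a b c d * Mat2 a b c d = -1"
  shows "d = -a" "a*a + b*c = -1" "b \<noteq> 0" "c \<noteq> 0"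
proof -
  have e: "a*a + b*c = -1" "a*b + b*d = 0"
    using assms by (simp_all add: one_mat2_def)
  have "b * c < 0" using e(1) by (smt (verit) zero_le_square)
  then show bc: "b \<noteq> 0" "c \<noteq> 0" by auto
  have "b * (a + d) = 0" using e(2) by (simp add: algebra_simps)
  then show "d = -a" using bc by simp
  show "a*a + b*c = -1" by (rule e(1))
qed

lemma complex_structure2_no_real_eigenvector:
  assumes "M * M = -1" "M = Mat2 m1 m2 m3 m4"
    and "v1 * (m3*v1 + m4*v2) - v2 * (m1*v1 + m2*v2) = 0"
  shows "v1 = 0 \<and> v2 = 0"
proof -
  note c = complex_structure2_entries[OF assms(1)[unfolded assms(2)]]
  \<comment> \<open>m3 det[v, Mv] is a sum of squares\<close>
  have "m3 * (v1 * (m3*v1 + m4*v2) - v2 * (m1*v1 + m2*v2))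
      = (m3*v1 - m1*v2)^2 - (m1*m1 + m2*m3) * v2^2"
    using c(1) by (simp add: algebra_simps power2_eq_square)
  then have "m3 * (v1 * (m3*v1 + m4*v2) - v2 * (m1*v1 + m2*v2)) = (m3*v1 - m1*v2)^2 + v2^2"
    using c(2) by simp
  then have "m3*v1 - m1*v2 = 0 \<and> v2 = 0" using assms(3) by (metis mult_zero_right sum_power2_eq_zero_iff)
  then show ?thesis using c(4) by auto
qed

text \<open>A singular X with X M = - N X has an M-invariant kernel, which a complex structure M
  cannot have unless the kernel is everything.\<close>

lemma singular_anti_intertwiner_eq_0:
  assumes "det2 X = 0" "X * M = - (N * X)" "M * M = -1"
  shows "X = 0"
proof (rule ccontr)
  assume "X \<noteq> 0"
  obtain m1 m2 m3 m4 where M: "M = Mat2 m1 m2 m3 m4" by (cases M)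
  have kernel: "v1 = 0 \<and> v2 = 0" if "X * Mat2 v1 0 v2 0 = 0" for v1 v2
  proof -
    define V where "V = Mat2 v1 0 v2 0"
    define E where "E = Mat2 0 1 0 0"
    define W where "W = V + M * V * E"
    have XV: "X * (V * E) = 0" using that by (simp add: V_def mult.assoc[symmetric])
    have "X * W = X * V + (X * M) * V * E" by (simp add: W_def distrib_left mult.assoc)
    also have "\<dots> = 0" using that XV by (simp add: V_def assms(2) mult.assoc)
    finally have "X * W = 0 * W" by simp
    then have "det2 W = 0" using mult2_right_cancel[of W X 0] \<open>X \<noteq> 0\<close> by auto
    then have "v1 * (m3*v1 + m4*v2) - v2 * (m1*v1 + m2*v2) = 0"
      by (simp add: W_def V_def E_def M algebra_simps)
    then show ?thesis by (rule complex_structure2_no_real_eigenvector[OF assms(3) M])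
  qed
  obtain a b c d where X: "X = Mat2 a b c d" by (cases X)
  have ad: "a*d - b*c = 0" using assms(1) X by simp
  have "X * Mat2 d 0 (-c) 0 = 0" "X * Mat2 (-b) 0 a 0 = 0"
    using ad by (simp_all add: X zero_mat2_def algebra_simps)
  then have "d = 0 \<and> c = 0" "b = 0 \<and> a = 0" using kernel by fastforce+
  then show False using \<open>X \<noteq> 0\<close> X by (simp add: zero_mat2_def)
qed

lemma complex_structure2_conj_rot:
  assumes "Mat2 a b c d * Mat2 a b c d = -1"
  shows "inv2 (Mat2 1 a 0 c) * Mat2 a b c d = rot * inv2 (Mat2 1 a 0 c)" "c \<noteq> 0"
proof -
  note h = complex_structure2_entries[OF assms]
  show "c \<noteq> 0" by (rule h(4))
  have "det2 (Mat2 1 a 0 c) \<noteq> 0" using h(4) by simp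
  moreover have "Mat2 a b c d * Mat2 1 a 0 c = Mat2 1 a 0 c * rot"
    using h(1,2) by (simp add: rot_def algebra_simps)
  ultimately show "inv2 (Mat2 1 a 0 c) * Mat2 a b c d = rot * inv2 (Mat2 1 a 0 c)"
    by (rule conj2_by_inv2)
qed

lemma commutes_rot_det2_pos:
  assumes "B * rot = rot * B" "det2 B \<noteq> 0"
  shows "det2 B > 0"
proof (cases B)
  case (Mat2 a b c d)
  have "Mat2 (b * 1) (a * -1) (d * 1) (c * -1) = Mat2 (-1 * c) (-1 * d) (1 * a) (1 * b)"
    using assms(1) unfolding Mat2 rot_def
    by (simp only: times_mat2.simps mult_zero_left mult_zero_right add_0 add_0_right)
  then have "b = -c" "a = d" unfolding mat2.inject by linarith+
  then have "det2 B = a^2 + c^2" using Mat2 by (simp add: power2_eq_square)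
  then show ?thesis using assms(2) by (simp add: sum_power2_gt_zero_iff sum_power2_eq_zero_iff)
qed

section \<open>Block decomposition of 6\<times>6 matrices\<close>

text \<open>Blocks are indexed by 0, 1, 2 for the planes spanned by (x1,x2), (x3,x4) and the centre (x5,x6).\<close>

definition block :: "real mat \<Rightarrow> nat \<Rightarrow> nat \<Rightarrow> mat2" where
  "block A r c = Mat2 (A$$(2*r,2*c)) (A$$(2*r,2*c+1)) (A$$(2*r+1,2*c)) (A$$(2*r+1,2*c+1))"

lemma block_entries:
  "block A 0 0 = Mat2 (A$$(0,0)) (A$$(0,1)) (A$$(1,0)) (A$$(1,1))"
  "block A 0 1 = Mat2 (A$$(0,2)) (A$$(0,3)) (A$$(1,2)) (A$$(1,3))"
  "block A 0 2 = Mat2 (A$$(0,4)) (A$$(0,5)) (A$$(1,4)) (A$$(1,5))"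
  "block A 1 0 = Mat2 (A$$(2,0)) (A$$(2,1)) (A$$(3,0)) (A$$(3,1))"
  "block A 1 1 = Mat2 (A$$(2,2)) (A$$(2,3)) (A$$(3,2)) (A$$(3,3))"
  "block A 1 2 = Mat2 (A$$(2,4)) (A$$(2,5)) (A$$(3,4)) (A$$(3,5))"
  "block A 2 0 = Mat2 (A$$(4,0)) (A$$(4,1)) (A$$(5,0)) (A$$(5,1))"
  "block A 2 1 = Mat2 (A$$(4,2)) (A$$(4,3)) (A$$(5,2)) (A$$(5,3))"
  "block A 2 2 = Mat2 (A$$(4,4)) (A$$(4,5)) (A$$(5,4)) (A$$(5,5))"
  by (simp_all add: block_def numeral_eq_Suc)

text \<open>Case splits on indices below 3 produce the index 1 as Suc 0, hence both forms.\<close>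

lemmas block_simps = block_entries block_entries[unfolded One_nat_def]

lemma less_3_cases: "(r::nat) < 3 \<Longrightarrow> r = 0 \<or> r = 1 \<or> r = 2"
  by linarith

lemma index_mult_mat_6:
  assumes "A \<in> carrier_mat 6 6" "B \<in> carrier_mat 6 6" "i < 6" "j < 6"
  shows "(A * B) $$ (i,j) = A$$(i,0)*B$$(0,j) + A$$(i,1)*B$$(1,j) + A$$(i,2)*B$$(2,j)
     + A$$(i,3)*B$$(3,j) + A$$(i,4)*B$$(4,j) + (A$$(i,5)*B$$(5,j)::real)"
proof -
  have "(A * B) $$ (i,j) = (\<Sum>k<6. A $$ (i,k) * B $$ (k,j))"
    using assms by (simp add: scalar_prod_def lessThan_atLeast0)
  then show ?thesis by (simp add: numeral_eq_Suc)
qed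

lemma index_mult_mat_vec_6:
  assumes "A \<in> carrier_mat 6 6" "v \<in> carrier_vec 6" "i < 6"
  shows "(A *\<^sub>v v) $ i = A$$(i,0)*v$0 + A$$(i,1)*v$1 + A$$(i,2)*v$2
     + A$$(i,3)*v$3 + A$$(i,4)*v$4 + (A$$(i,5)*v$5::real)"
proof -
  have "(A *\<^sub>v v) $ i = (\<Sum>k<6. A $$ (i,k) * v $ k)"
    using assms by (simp add: scalar_prod_def lessThan_atLeast0)
  then show ?thesis by (simp add: numeral_eq_Suc)
qed

lemma block_mult:
  assumes "A \<in> carrier_mat 6 6" "B \<in> carrier_mat 6 6" "r < 3" "c < 3"
  shows "block (A * B) r c = block A r 0 * block B 0 c + block A r 1 * block B 1 c + block A r 2 * block B 2 c"
  using less_3_cases[OF assms(3)] less_3_cases[OF assms(4)]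
  by (auto simp: block_def index_mult_mat_6[OF assms(1,2)] algebra_simps numeral_eq_Suc)

lemma mat_eq_by_blocks:
  assumes "A \<in> carrier_mat 6 6" "B \<in> carrier_mat 6 6"
    and blocks: "\<And>r c. r < 3 \<Longrightarrow> c < 3 \<Longrightarrow> block A r c = block B r c"
  shows "A = B"
proof (rule eq_matI)
  fix i j assume "i < dim_row B" "j < dim_col B"
  define r where "r = i div 2"
  define c where "c = j div 2"
  have rc: "r < 3" "c < 3" using \<open>i < dim_row B\<close> \<open>j < dim_col B\<close> assms(2) r_def c_def by auto
  have i: "i = 2*r + i mod 2" and j: "j = 2*c + j mod 2" using r_def c_def by auto
  have "i mod 2 = 0 \<or> i mod 2 = 1" "j mod 2 = 0 \<or> j mod 2 = 1" by auto
  with blocks[OF rc] show "A $$ (i, j) = B $$ (i, j)"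
    by (subst i, subst j, subst i, subst j) (auto simp: block_def)
qed (use assms in auto)

lemma mat_of_rows_list_index:
  "i < 6 \<Longrightarrow> j < 6 \<Longrightarrow> length rs = 6 \<Longrightarrow> mat_of_rows_list 6 rs $$ (i,j) = rs ! i ! j"
  by (simp add: mat_of_rows_list_def)

lemma mat_of_rows_list_carrier: "length rs = 6 \<Longrightarrow> mat_of_rows_list 6 rs \<in> carrier_mat 6 6"
  by (simp add: mat_of_rows_list_def)

fun mat2_entry :: "mat2 \<Rightarrow> nat \<Rightarrow> nat \<Rightarrow> real" where
  "mat2_entry (Mat2 a b c d) i j = (if i = 0 then (if j = 0 then a else b) else (if j = 0 then c else d))"

definition block_mat :: "(nat \<Rightarrow> nat \<Rightarrow> mat2) \<Rightarrow> real mat" where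
  "block_mat f = mat 6 6 (\<lambda>(i,j). mat2_entry (f (i div 2) (j div 2)) (i mod 2) (j mod 2))"

lemma block_mat_carrier [simp]: "block_mat f \<in> carrier_mat 6 6"
  by (simp add: block_mat_def)

lemma block_block_mat: "r < 3 \<Longrightarrow> c < 3 \<Longrightarrow> block (block_mat f) r c = f r c"
  by (cases "f r c") (simp add: block_def block_mat_def)

lemma block_one_mat: "r < 3 \<Longrightarrow> c < 3 \<Longrightarrow> block (1\<^sub>m 6) r c = (if r = c then 1 else 0)"
  by (auto simp: block_def one_mat2_def zero_mat2_def)

lemma block_uminus: "A \<in> carrier_mat 6 6 \<Longrightarrow> r < 3 \<Longrightarrow> c < 3 \<Longrightarrow> block (- A) r c = - block A r c"
  by (simp add: block_def)

definition centre_split :: "real mat \<Rightarrow> bool" where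
  "centre_split J \<longleftrightarrow> J \<in> carrier_mat 6 6 \<and>
     block J 0 2 = 0 \<and> block J 1 2 = 0 \<and> block J 2 0 = 0 \<and> block J 2 1 = 0"

lemma square_eq_minus_one_blocks:
  assumes "J \<in> carrier_mat 6 6" "J * J = - 1\<^sub>m 6" "block J 0 2 = 0" "block J 1 2 = 0"
  shows "block J 0 0 * block J 0 0 + block J 0 1 * block J 1 0 = -1"
    "block J 0 0 * block J 0 1 + block J 0 1 * block J 1 1 = 0"
    "block J 1 0 * block J 0 0 + block J 1 1 * block J 1 0 = 0"
    "block J 1 0 * block J 0 1 + block J 1 1 * block J 1 1 = -1"
    "block J 2 2 * block J 2 2 = -1"
    "block J 2 0 * block J 0 0 + block J 2 1 * block J 1 0 + block J 2 2 * block J 2 0 = 0"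
    "block J 2 0 * block J 0 1 + block J 2 1 * block J 1 1 + block J 2 2 * block J 2 1 = 0"
proof -
  have b: "block J r 0 * block J 0 c + block J r 1 * block J 1 c + block J r 2 * block J 2 c
     = (if r = c then -1 else 0)" if "r < 3" "c < 3" for r c
  proof -
    have "block (J * J) r c = - block (1\<^sub>m 6) r c"
      using assms(2) block_uminus[of "1\<^sub>m 6" r c] that by simp
    then show ?thesis using block_mult[OF assms(1,1) that] block_one_mat[OF that] by simp
  qed
  show "block J 0 0 * block J 0 0 + block J 0 1 * block J 1 0 = -1"
    "block J 0 0 * block J 0 1 + block J 0 1 * block J 1 1 = 0"
    "block J 1 0 * block J 0 0 + block J 1 1 * block J 1 0 = 0"
    "block J 1 0 * block J 0 1 + block J 1 1 * block J 1 1 = -1"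
    "block J 2 2 * block J 2 2 = -1"
    "block J 2 0 * block J 0 0 + block J 2 1 * block J 1 0 + block J 2 2 * block J 2 0 = 0"
    "block J 2 0 * block J 0 1 + block J 2 1 * block J 1 1 + block J 2 2 * block J 2 1 = 0"
    using b[of 0 0] b[of 0 1] b[of 1 0] b[of 1 1] b[of 2 2] b[of 2 0] b[of 2 1] assms(3,4) by simp_all
qed

lemma centre_split_square_eq_minus_one:
  assumes "centre_split J"
    "block J 0 0 * block J 0 0 + block J 0 1 * block J 1 0 = -1"
    "block J 0 0 * block J 0 1 + block J 0 1 * block J 1 1 = 0"
    "block J 1 0 * block J 0 0 + block J 1 1 * block J 1 0 = 0"
    "block J 1 0 * block J 0 1 + block J 1 1 * block J 1 1 = -1"
    "block J 2 2 * block J 2 2 = -1"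
  shows "J * J = - 1\<^sub>m 6"
proof -
  have J: "J \<in> carrier_mat 6 6" using assms(1) by (simp add: centre_split_def)
  show ?thesis
  proof (rule mat_eq_by_blocks)
    fix r c :: nat assume rc: "r < 3" "c < 3"
    show "block (J * J) r c = block (- 1\<^sub>m 6) r c"
      using less_3_cases[OF rc(1)] less_3_cases[OF rc(2)] assms
      by (auto simp: block_mult[OF J J rc] block_uminus[OF _ rc] block_one_mat[OF rc] centre_split_def)
  qed (use J in auto)
qed

section \<open>Integrability in block form\<close>

definition unit_coord :: "nat \<Rightarrow> nat \<Rightarrow> real" where "unit_coord p k = (if k = p then 1 else 0)"
definition col_coord :: "real mat \<Rightarrow> nat \<Rightarrow> nat \<Rightarrow> real" where "col_coord J p k = J$$(k,p)"
definition bracket5 :: "(nat \<Rightarrow> real) \<Rightarrow> (nat \<Rightarrow> real) \<Rightarrow> real" where "bracket5 f g = f 0 * g 1 - f 1 * g 0"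
definition bracket6 :: "(nat \<Rightarrow> real) \<Rightarrow> (nat \<Rightarrow> real) \<Rightarrow> real" where "bracket6 f g = f 2 * g 3 - f 3 * g 2"

lemmas bracket_coord_defs = unit_coord_def col_coord_def bracket5_def bracket6_def

lemma nbr_index: "k < 6 \<Longrightarrow> nbr X Y $ k =
    (if k = 4 then X$0*Y$1 - X$1*Y$0 else if k = 5 then X$2*Y$3 - X$3*Y$2 else 0)"
  by (simp add: nbr_def)

lemma nbr_carrier [simp]: "nbr X Y \<in> carrier_vec 6"
  by (simp add: nbr_def)

lemma dim_nbr [simp]: "dim_vec (nbr X Y) = 6"
  by (simp add: nbr_def)

lemma mult_mat_vec_unit_6: "J \<in> carrier_mat 6 6 \<Longrightarrow> p < 6 \<Longrightarrow> k < 6 \<Longrightarrow>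
    (J *\<^sub>v unit_vec 6 p) $ k = col_coord J p k"
  by (simp add: col_coord_def)

lemma nijenhuis_on_basis:
  assumes "integrable_cx J" "p < 6" "q < 6" "i < 6"
  shows "(if i = 4 then bracket5 (col_coord J p) (col_coord J q) - bracket5 (unit_coord p) (unit_coord q)
          else if i = 5 then bracket6 (col_coord J p) (col_coord J q) - bracket6 (unit_coord p) (unit_coord q)
          else 0)
     - J$$(i,4) * (bracket5 (col_coord J p) (unit_coord q) + bracket5 (unit_coord p) (col_coord J q))
     - J$$(i,5) * (bracket6 (col_coord J p) (unit_coord q) + bracket6 (unit_coord p) (col_coord J q)) = 0"
proof -
  have J: "J \<in> carrier_mat 6 6" using assms(1) by (simp add: integrable_cx_def)
  define X where "X = (unit_vec 6 p :: real vec)"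
  define Y where "Y = (unit_vec 6 q :: real vec)"
  have XY: "X \<in> carrier_vec 6" "Y \<in> carrier_vec 6" by (auto simp: X_def Y_def)
  have "nbr (J *\<^sub>v X) (J *\<^sub>v Y) - nbr X Y - J *\<^sub>v nbr (J *\<^sub>v X) Y - J *\<^sub>v nbr X (J *\<^sub>v Y) = 0\<^sub>v 6"
    using assms(1) XY by (simp add: integrable_cx_def)
  then have "(nbr (J *\<^sub>v X) (J *\<^sub>v Y) - nbr X Y - J *\<^sub>v nbr (J *\<^sub>v X) Y - J *\<^sub>v nbr X (J *\<^sub>v Y)) $ i = 0"
    using assms(4) by simp
  then have N: "nbr (J *\<^sub>v X) (J *\<^sub>v Y) $ i - nbr X Y $ i - (J *\<^sub>v nbr (J *\<^sub>v X) Y) $ i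
      - (J *\<^sub>v nbr X (J *\<^sub>v Y)) $ i = 0"
    using assms(4) J by simp
  have JXY: "\<And>k. k < 6 \<Longrightarrow> (J *\<^sub>v X) $ k = col_coord J p k" "\<And>k. k < 6 \<Longrightarrow> (J *\<^sub>v Y) $ k = col_coord J q k"
    using mult_mat_vec_unit_6[OF J] assms(2,3) by (auto simp: X_def Y_def)
  have XY_coord: "\<And>k. k < 6 \<Longrightarrow> X $ k = unit_coord p k" "\<And>k. k < 6 \<Longrightarrow> Y $ k = unit_coord q k"
    using assms(2,3) by (auto simp: X_def Y_def unit_coord_def)
  have centre_valued: "\<And>W. W \<in> carrier_vec 6 \<Longrightarrow> (\<forall>k<4. W $ k = 0) \<Longrightarrow>
      (J *\<^sub>v W) $ i = J$$(i,4) * W$4 + J$$(i,5) * W$5"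
    using index_mult_mat_vec_6[OF J _ assms(4)] by auto
  have lower_zero: "\<And>U V. \<forall>k<4. nbr U V $ k = 0" by (simp add: nbr_def)
  have "nbr (J *\<^sub>v X) (J *\<^sub>v Y) $ i = (if i = 4 then bracket5 (col_coord J p) (col_coord J q)
      else if i = 5 then bracket6 (col_coord J p) (col_coord J q) else 0)"
    "nbr X Y $ i = (if i = 4 then bracket5 (unit_coord p) (unit_coord q)
      else if i = 5 then bracket6 (unit_coord p) (unit_coord q) else 0)"
    "(J *\<^sub>v nbr (J *\<^sub>v X) Y) $ i
      = J$$(i,4) * bracket5 (col_coord J p) (unit_coord q) + J$$(i,5) * bracket6 (col_coord J p) (unit_coord q)"
    "(J *\<^sub>v nbr X (J *\<^sub>v Y)) $ i
      = J$$(i,4) * bracket5 (unit_coord p) (col_coord J q) + J$$(i,5) * bracket6 (unit_coord p) (col_coord J q)"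
    by (simp_all add: nbr_index[OF assms(4)] centre_valued lower_zero nbr_index JXY XY_coord bracket5_def bracket6_def)
  then show ?thesis using N by (auto simp: algebra_simps)
qed

lemma square_entry:
  assumes "integrable_cx J" "i < 6" "j < 6"
  shows "J$$(i,0)*J$$(0,j) + J$$(i,1)*J$$(1,j) + J$$(i,2)*J$$(2,j)
     + J$$(i,3)*J$$(3,j) + J$$(i,4)*J$$(4,j) + J$$(i,5)*J$$(5,j) = (if i = j then -1 else 0)"
proof -
  have J: "J \<in> carrier_mat 6 6" and sq: "J * J = - 1\<^sub>m 6" using assms(1) by (auto simp: integrable_cx_def)
  have "(J*J)$$(i,j) = (if i = j then -1 else 0)" using sq assms(2,3) by simp
  then show ?thesis using index_mult_mat_6[OF J J assms(2,3)] by simp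
qed

text \<open>The brackets of x5 with x1, x2 and of x6 with x3, x4 kill the diagonal
  entries; the mixed ones leave only a product, and a nonvanishing product would force a real square
  root of -1 in the centre block.\<close>

lemma integrable_centre_invariant:
  assumes "integrable_cx J"
  shows "block J 0 2 = 0" "block J 1 2 = 0"
proof -
  have s: "J$$(i,4) * (bracket5 (col_coord J p) (unit_coord q) + bracket5 (unit_coord p) (col_coord J q))
      + J$$(i,5) * (bracket6 (col_coord J p) (unit_coord q) + bracket6 (unit_coord p) (col_coord J q)) = 0"
    if "p < 6" "q < 6" "i < 4" for p q i
    using nijenhuis_on_basis[OF assms that(1,2), of i] that(3) by simp
  have a: "J$$(1,4) = 0" "J$$(0,4) = 0" "J$$(3,5) = 0" "J$$(2,5) = 0"
    using s[of 4 0 1] s[of 4 1 0] s[of 5 2 3] s[of 5 3 2] by (simp_all add: bracket_coord_defs)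
  have b: "J$$(0,5) * J$$(3,4) = 0" "J$$(1,5) * J$$(3,4) = 0" "J$$(0,5) * J$$(2,4) = 0" "J$$(1,5) * J$$(2,4) = 0"
    using s[of 4 2 0] s[of 4 2 1] s[of 4 3 0] s[of 4 3 1] by (simp_all add: bracket_coord_defs)
  have c: "J$$(2,4) = 0 \<and> J$$(3,4) = 0 \<and> J$$(0,5) = 0 \<and> J$$(1,5) = 0"
  proof (cases "J$$(2,4) = 0 \<and> J$$(3,4) = 0")
    case True
    have q44: "J$$(4,4)*J$$(4,4) + J$$(4,5)*J$$(5,4) = -1"
      using square_entry[OF assms, of 4 4] a True by simp
    have "J$$(5,4) \<noteq> 0"
    proof
      assume "J$$(5,4) = 0"
      with q44 have "J$$(4,4)*J$$(4,4) = -1" by simp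
      then show False by (smt (verit) zero_le_square)
    qed
    moreover have "J$$(0,5)*J$$(5,4) = 0" "J$$(1,5)*J$$(5,4) = 0"
      using square_entry[OF assms, of 0 4] square_entry[OF assms, of 1 4] a True by simp_all
    ultimately show ?thesis using True by simp
  next
    case False
    then have z: "J$$(0,5) = 0" "J$$(1,5) = 0" using b by auto
    then have "J$$(2,4)*J$$(4,5) = 0" "J$$(3,4)*J$$(4,5) = 0"
      using square_entry[OF assms, of 2 5] square_entry[OF assms, of 3 5] a by simp_all
    then have "J$$(4,5) = 0" using False by auto
    then have "J$$(5,5)*J$$(5,5) = -1" using square_entry[OF assms, of 5 5] a z by simp
    then show ?thesis by (smt (verit) zero_le_square)
  qed
  show "block J 0 2 = 0" "block J 1 2 = 0"
    using a c by (simp_all add: block_simps zero_mat2_def)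
qed

text \<open>The centre components of the Nijenhuis tensor on the pairs (x1,x2) and (x3,x4), in terms of the
  blocks [P Q; R S] of J on span(x1..x4) and the centre block Z.\<close>

fun nijenhuis_relations :: "mat2 \<Rightarrow> mat2 \<Rightarrow> mat2 \<Rightarrow> mat2 \<Rightarrow> mat2 \<Rightarrow> bool" where
  "nijenhuis_relations P Q R S (Mat2 z11 z12 z21 z22) \<longleftrightarrow>
     det2 P - 1 = tr2 P * z11 \<and> det2 R = tr2 P * z21 \<and>
     det2 Q = tr2 S * z12 \<and> det2 S - 1 = tr2 S * z22"

definition block_integrable :: "real mat \<Rightarrow> bool" where
  "block_integrable J \<longleftrightarrow> J \<in> carrier_mat 6 6 \<and> J * J = - 1\<^sub>m 6 \<and> block J 0 2 = 0 \<and> block J 1 2 = 0 \<and>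
     nijenhuis_relations (block J 0 0) (block J 0 1) (block J 1 0) (block J 1 1) (block J 2 2)"

lemma integrable_block_integrable:
  assumes "integrable_cx J"
  shows "block_integrable J"
proof -
  note n = nijenhuis_on_basis[OF assms]
  have "det2 (block J 0 0) - 1 = tr2 (block J 0 0) * J$$(4,4)"
    "det2 (block J 1 0) = tr2 (block J 0 0) * J$$(5,4)"
    "det2 (block J 0 1) = tr2 (block J 1 1) * J$$(4,5)"
    "det2 (block J 1 1) - 1 = tr2 (block J 1 1) * J$$(5,5)"
    using n[of 0 1 4] n[of 0 1 5] n[of 2 3 4] n[of 2 3 5]
    by (simp_all add: bracket_coord_defs block_simps algebra_simps)
  then show ?thesis
    using assms integrable_centre_invariant[OF assms]
    by (simp add: block_integrable_def integrable_cx_def block_simps)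
qed

section \<open>First kind automorphisms\<close>

definition det_diag :: "mat2 \<Rightarrow> mat2 \<Rightarrow> mat2" where
  "det_diag B1 B2 = Mat2 (det2 B1) 0 0 (det2 B2)"

lemma det2_det_diag: "det2 (det_diag B1 B2) = det2 B1 * det2 B2"
  by (simp add: det_diag_def)

lemma all_less_2: "(\<forall>i<(2::nat). P i) \<longleftrightarrow> P 0 \<and> P 1"
  by (auto simp: numeral_eq_Suc All_less_Suc)

lemma all_less_4: "(\<forall>i<(4::nat). P i) \<longleftrightarrow> P 0 \<and> P 1 \<and> P 2 \<and> P 3"
  by (auto simp: numeral_eq_Suc All_less_Suc)

lemma all_less_6: "(\<forall>i<(6::nat). P i) \<longleftrightarrow> P 0 \<and> P 1 \<and> P 2 \<and> P 3 \<and> P 4 \<and> P 5"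
  by (auto simp: numeral_eq_Suc All_less_Suc)

lemmas all_less_simps = all_less_2 all_less_4 all_less_6

lemma first_kind_blocks:
  assumes "first_kind F"
  shows "F \<in> carrier_mat 6 6" "block F 0 1 = 0" "block F 0 2 = 0" "block F 1 0 = 0" "block F 1 2 = 0"
    "block F 2 2 = det_diag (block F 0 0) (block F 1 1)"
    "det2 (block F 0 0) \<noteq> 0" "det2 (block F 1 1) \<noteq> 0"
  using assms unfolding first_kind_def
  by (simp_all add: all_less_simps block_simps zero_mat2_def det_diag_def)

lemma first_kind_block_mat:
  assumes "f 0 1 = 0" "f 0 2 = 0" "f 1 0 = 0" "f 1 2 = 0" "f 2 2 = det_diag (f 0 0) (f 1 1)"
    "det2 (f 0 0) \<noteq> 0" "det2 (f 1 1) \<noteq> 0"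
  shows "first_kind (block_mat f)"
proof (cases "f 0 0"; cases "f 1 1")
  fix a b c d e g h k assume "f 0 0 = Mat2 a b c d" "f 1 1 = Mat2 e g h k"
  then show ?thesis using assms unfolding first_kind_def
    by (simp add: all_less_simps block_mat_def zero_mat2_def det_diag_def)
qed

lemma first_equiv_refl: "J \<in> carrier_mat 6 6 \<Longrightarrow> first_equiv J J"
  unfolding first_equiv_def equiv_by_def first_kind_def
  by (intro exI[of _ "1\<^sub>m 6"]) (auto simp: all_less_simps)

lemma equiv_by_of_intertwining:
  assumes "P \<in> carrier_mat 6 6" "Q \<in> carrier_mat 6 6" "P * Q = 1\<^sub>m 6" "Q * P = 1\<^sub>m 6"
    "K \<in> carrier_mat 6 6" "P * J = K * P"
  shows "equiv_by P J K"
proof -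
  have "P * J * Q = K * (P * Q)" using assms by (simp add: assoc_mult_mat)
  then show ?thesis using assms unfolding equiv_by_def by auto
qed

definition first_kind_mat :: "mat2 \<Rightarrow> mat2 \<Rightarrow> mat2 \<Rightarrow> mat2 \<Rightarrow> real mat" where
  "first_kind_mat B1 B2 L0 L1 = block_mat (\<lambda>r c.
     if r = 0 \<and> c = 0 then B1 else if r = 1 \<and> c = 1 then B2 else if r = 2 \<and> c = 2 then det_diag B1 B2
     else if r = 2 \<and> c = 0 then det_diag B1 B2 * L0 else if r = 2 \<and> c = 1 then det_diag B1 B2 * L1 else 0)"

lemma block_first_kind_mat:
  "r < 3 \<Longrightarrow> c < 3 \<Longrightarrow> block (first_kind_mat B1 B2 L0 L1) r c =
     (if r = 0 \<and> c = 0 then B1 else if r = 1 \<and> c = 1 then B2 else if r = 2 \<and> c = 2 then det_diag B1 B2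
     else if r = 2 \<and> c = 0 then det_diag B1 B2 * L0 else if r = 2 \<and> c = 1 then det_diag B1 B2 * L1 else 0)"
  unfolding first_kind_mat_def by (rule block_block_mat)

lemma first_kind_first_kind_mat:
  "det2 B1 \<noteq> 0 \<Longrightarrow> det2 B2 \<noteq> 0 \<Longrightarrow> first_kind (first_kind_mat B1 B2 L0 L1)"
  unfolding first_kind_mat_def by (rule first_kind_block_mat) simp_all

lemma first_kind_mat_invertible:
  assumes "det2 B1 \<noteq> 0" "det2 B2 \<noteq> 0"
  shows "\<exists>Q \<in> carrier_mat 6 6. first_kind_mat B1 B2 L0 L1 * Q = 1\<^sub>m 6 \<and> Q * first_kind_mat B1 B2 L0 L1 = 1\<^sub>m 6"
proof -
  define D where "D = det_diag B1 B2"
  have dD: "det2 D \<noteq> 0" using assms by (simp add: D_def det2_det_diag)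
  define P where "P = first_kind_mat B1 B2 L0 L1"
  define Q where "Q = block_mat (\<lambda>r c. if r = 0 \<and> c = 0 then inv2 B1 else if r = 1 \<and> c = 1 then inv2 B2
      else if r = 2 \<and> c = 2 then inv2 D else if r = 2 \<and> c = 0 then - (L0 * inv2 B1)
      else if r = 2 \<and> c = 1 then - (L1 * inv2 B2) else 0)"
  have P: "P \<in> carrier_mat 6 6" and Q: "Q \<in> carrier_mat 6 6"
    by (simp_all add: P_def first_kind_mat_def Q_def)
  have bP: "\<And>r c. r < 3 \<Longrightarrow> c < 3 \<Longrightarrow> block P r c = (if r = 0 \<and> c = 0 then B1 else if r = 1 \<and> c = 1 then B2
     else if r = 2 \<and> c = 2 then D else if r = 2 \<and> c = 0 then D * L0 else if r = 2 \<and> c = 1 then D * L1 else 0)"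
    by (simp add: P_def D_def block_first_kind_mat)
  note bQ = block_block_mat[where f = "\<lambda>r c. if r = 0 \<and> c = 0 then inv2 B1 else if r = 1 \<and> c = 1 then inv2 B2
      else if r = 2 \<and> c = 2 then inv2 D else if r = 2 \<and> c = 0 then - (L0 * inv2 B1)
      else if r = 2 \<and> c = 1 then - (L1 * inv2 B2) else 0", folded Q_def]
  have "P * Q = 1\<^sub>m 6"
  proof (rule mat_eq_by_blocks)
    fix r c :: nat assume rc: "r < 3" "c < 3"
    show "block (P * Q) r c = block (1\<^sub>m 6) r c"
      using less_3_cases[OF rc(1)] less_3_cases[OF rc(2)] assms dD
      by (auto simp: block_mult[OF P Q rc] block_one_mat[OF rc] bP bQ inv2_right mult.assoc)
  qed (use P Q in auto)
  moreover have "Q * P = 1\<^sub>m 6"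
  proof (rule mat_eq_by_blocks)
    fix r c :: nat assume rc: "r < 3" "c < 3"
    show "block (Q * P) r c = block (1\<^sub>m 6) r c"
      using less_3_cases[OF rc(1)] less_3_cases[OF rc(2)] assms dD
      by (auto simp: block_mult[OF Q P rc] block_one_mat[OF rc] bP bQ inv2_left inv2_left_mult mult.assoc)
  qed (use P Q in auto)
  ultimately show ?thesis using Q by (auto simp: P_def)
qed

definition block_intertwiner :: "mat2 \<Rightarrow> mat2 \<Rightarrow> real mat \<Rightarrow> real mat \<Rightarrow> bool" where
  "block_intertwiner B1 B2 J K \<longleftrightarrow> det2 B1 \<noteq> 0 \<and> det2 B2 \<noteq> 0 \<and>
     B1 * block J 0 0 = block K 0 0 * B1 \<and> B1 * block J 0 1 = block K 0 1 * B2 \<and>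
     B2 * block J 1 0 = block K 1 0 * B1 \<and> B2 * block J 1 1 = block K 1 1 * B2 \<and>
     det_diag B1 B2 * block J 2 2 = block K 2 2 * det_diag B1 B2"

lemma first_equiv_block_intertwiner:
  assumes "first_equiv J K" "centre_split J" "centre_split K"
  obtains B1 B2 where "block_intertwiner B1 B2 J K"
proof -
  obtain F Q where F: "first_kind F" and Q: "Q \<in> carrier_mat 6 6" "F * Q = 1\<^sub>m 6" "Q * F = 1\<^sub>m 6"
    and K: "K = F * J * Q"
    using assms(1) unfolding first_equiv_def equiv_by_def by blast
  note Fb = first_kind_blocks[OF F]
  have J: "J \<in> carrier_mat 6 6" and Kc: "K \<in> carrier_mat 6 6"
    using assms(2,3) by (simp_all add: centre_split_def)
  have "K * F = F * J * (Q * F)" using K assoc_mult_mat[OF mult_carrier_mat[OF Fb(1) J] Q(1) Fb(1)] by simp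
  then have FJ: "F * J = K * F" using Q(3) Fb(1) J by simp
  have b: "block F r 0 * block J 0 c + block F r 1 * block J 1 c + block F r 2 * block J 2 c
     = block K r 0 * block F 0 c + block K r 1 * block F 1 c + block K r 2 * block F 2 c"
    if "r < 3" "c < 3" for r c
    using FJ block_mult[OF Fb(1) J that] block_mult[OF Kc Fb(1) that] by metis
  have "block_intertwiner (block F 0 0) (block F 1 1) J K"
    unfolding block_intertwiner_def
    using b[of 0 0] b[of 0 1] b[of 1 0] b[of 1 1] b[of 2 2] Fb assms(2,3)
    by (simp add: centre_split_def)
  then show ?thesis by (rule that)
qed

text \<open>The lower left part D [L0 L1] (D = det_diag B1 B2) of a first kind automorphism conjugates away
  the lower left blocks [U V] of J exactly when [L0 L1] [P Q; R S] + [U V] = Z [L0 L1]. Since J^2 = -1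
  gives [U V] [P Q; R S] + Z [U V] = 0, the choice [L0 L1] = - Z [U V] / 2 works.\<close>

lemma lower_left_correction:
  assumes "Z * Z = -1" "U * X + V * Y + Z * W = 0"
  shows "smult2 (-1/2) (Z * U) * X + smult2 (-1/2) (Z * V) * Y + W = Z * smult2 (-1/2) (Z * W)"
proof -
  have "smult2 (-1/2) (Z * U) * X + smult2 (-1/2) (Z * V) * Y = smult2 (-1/2) (Z * (U * X + V * Y))"
    by (simp add: smult2_mult_left smult2_add_right mult.assoc distrib_left)
  also have "\<dots> = smult2 (-1/2) W"
    using assms by (simp add: eq_neg_iff_add_eq_0[symmetric] mult.assoc[symmetric])
  finally have "smult2 (-1/2) (Z * U) * X + smult2 (-1/2) (Z * V) * Y + W = smult2 (-1/2) W + W"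
    by simp
  also have "\<dots> = smult2 (1/2) W"
    using smult2_add_left[of "-1/2" W 1] by simp
  also have "\<dots> = Z * smult2 (-1/2) (Z * W)"
    using assms(1) by (simp add: smult2_mult_right mult.assoc[symmetric] smult2_uminus_right)
  finally show ?thesis .
qed

lemma first_equiv_of_block_intertwiner:
  assumes J: "J \<in> carrier_mat 6 6" "J * J = - 1\<^sub>m 6" "block J 0 2 = 0" "block J 1 2 = 0"
    and K: "centre_split K" and B: "block_intertwiner B1 B2 J K"
  shows "first_equiv J K"
proof -
  note sq = square_eq_minus_one_blocks[OF J]
  have Kc: "K \<in> carrier_mat 6 6" using K by (simp add: centre_split_def)
  have dB: "det2 B1 \<noteq> 0" "det2 B2 \<noteq> 0" using B by (simp_all add: block_intertwiner_def)
  define Z where "Z = block J 2 2"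
  define D where "D = det_diag B1 B2"
  define L0 where "L0 = smult2 (-1/2) (Z * block J 2 0)"
  define L1 where "L1 = smult2 (-1/2) (Z * block J 2 1)"
  define P where "P = first_kind_mat B1 B2 L0 L1"
  have P: "P \<in> carrier_mat 6 6" by (simp add: P_def first_kind_mat_def)
  have DZ: "D * Z = block K 2 2 * D" using B by (simp add: block_intertwiner_def D_def Z_def)
  have lift: "D * A * X + D * A' * Y + D * W = block K 2 2 * (D * C)"
    if "A * X + A' * Y + W = Z * C" for A A' X Y W C
  proof -
    have "D * A * X + D * A' * Y + D * W = D * (A * X + A' * Y + W)" by (simp add: distrib_left mult.assoc)
    also have "\<dots> = D * Z * C" using that by (simp add: mult.assoc)
    finally show ?thesis using DZ by (simp add: mult.assoc)
  qed
  have lower: "D * L0 * block J 0 0 + D * L1 * block J 1 0 + D * block J 2 0 = block K 2 2 * (D * L0)"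
    "D * L0 * block J 0 1 + D * L1 * block J 1 1 + D * block J 2 1 = block K 2 2 * (D * L1)"
    using lift[OF lower_left_correction[OF sq(5,6), folded Z_def, folded L0_def L1_def]]
      lift[OF lower_left_correction[OF sq(5,7), folded Z_def, folded L0_def L1_def]] .
  have bP: "\<And>r c. r < 3 \<Longrightarrow> c < 3 \<Longrightarrow> block P r c = (if r = 0 \<and> c = 0 then B1 else if r = 1 \<and> c = 1 then B2
     else if r = 2 \<and> c = 2 then D else if r = 2 \<and> c = 0 then D * L0 else if r = 2 \<and> c = 1 then D * L1 else 0)"
    by (simp add: P_def D_def block_first_kind_mat)
  have "P * J = K * P"
  proof (rule mat_eq_by_blocks)
    fix r c :: nat assume rc: "r < 3" "c < 3"
    note facts = J(3,4) K[unfolded centre_split_def] B[unfolded block_intertwiner_def, folded D_def] lower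
    show "block (P * J) r c = block (K * P) r c"
      using less_3_cases[OF rc(1)] less_3_cases[OF rc(2)] facts facts[unfolded One_nat_def]
      by (auto simp: block_mult[OF P J(1) rc] block_mult[OF Kc P rc] bP)
  qed (use P J Kc in auto)
  moreover obtain Q where "Q \<in> carrier_mat 6 6" "P * Q = 1\<^sub>m 6" "Q * P = 1\<^sub>m 6"
    using first_kind_mat_invertible[OF dB] unfolding P_def by blast
  ultimately have "equiv_by P J K" using P Kc by (intro equiv_by_of_intertwining)
  then show ?thesis
    using first_kind_first_kind_mat[OF dB] unfolding first_equiv_def P_def by blast
qed

section \<open>Second kind automorphisms\<close>

lemma Theta_carrier: "Theta \<in> carrier_mat 6 6"
  unfolding Theta_def by (rule mat_of_rows_list_carrier) simp

lemma block_Theta: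
  "r < 3 \<Longrightarrow> c < 3 \<Longrightarrow> block Theta r c =
     (if r = 0 \<and> c = 1 then 1 else if r = 1 \<and> c = 0 then 1 else if r = 2 \<and> c = 2 then swap2 else 0)"
  by (drule less_3_cases, drule less_3_cases)
    (auto simp: block_simps Theta_def mat_of_rows_list_index zero_mat2_def one_mat2_def swap2_def)

lemma Theta_square: "Theta * Theta = 1\<^sub>m 6"
proof (rule mat_eq_by_blocks)
  fix r c :: nat assume rc: "r < 3" "c < 3"
  show "block (Theta * Theta) r c = block (1\<^sub>m 6) r c"
    using less_3_cases[OF rc(1)] less_3_cases[OF rc(2)]
    by (auto simp: block_mult[OF Theta_carrier Theta_carrier rc] block_Theta block_one_mat[OF rc]
        swap2_def one_mat2_def)
qed (use Theta_carrier in auto)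

lemma Theta_Theta_mult [simp]: "A \<in> carrier_mat 6 6 \<Longrightarrow> Theta * (Theta * A) = A"
  using assoc_mult_mat[OF Theta_carrier Theta_carrier] Theta_square by (metis left_mult_one_mat)

lemma block_Theta_conj:
  assumes "K \<in> carrier_mat 6 6"
  shows "block (Theta * K * Theta) 0 0 = block K 1 1" "block (Theta * K * Theta) 0 1 = block K 1 0"
    "block (Theta * K * Theta) 0 2 = block K 1 2 * swap2"
    "block (Theta * K * Theta) 1 0 = block K 0 1" "block (Theta * K * Theta) 1 1 = block K 0 0"
    "block (Theta * K * Theta) 1 2 = block K 0 2 * swap2"
    "block (Theta * K * Theta) 2 0 = swap2 * block K 2 1" "block (Theta * K * Theta) 2 1 = swap2 * block K 2 0"
    "block (Theta * K * Theta) 2 2 = swap2 * block K 2 2 * swap2"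
proof -
  have TK: "Theta * K \<in> carrier_mat 6 6" using assms Theta_carrier by simp
  have e: "\<And>r c. r < 3 \<Longrightarrow> c < 3 \<Longrightarrow> block (Theta * K * Theta) r c =
     (\<Sum>k\<in>{0,1,2::nat}. (\<Sum>l\<in>{0,1,2::nat}. block Theta r l * block K l k) * block Theta k c)"
    by (simp add: block_mult[OF TK Theta_carrier] block_mult[OF Theta_carrier assms] add.assoc)
  show "block (Theta * K * Theta) 0 0 = block K 1 1" "block (Theta * K * Theta) 0 1 = block K 1 0"
    "block (Theta * K * Theta) 0 2 = block K 1 2 * swap2"
    "block (Theta * K * Theta) 1 0 = block K 0 1" "block (Theta * K * Theta) 1 1 = block K 0 0"
    "block (Theta * K * Theta) 1 2 = block K 0 2 * swap2"
    "block (Theta * K * Theta) 2 0 = swap2 * block K 2 1" "block (Theta * K * Theta) 2 1 = swap2 * block K 2 0"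
    "block (Theta * K * Theta) 2 2 = swap2 * block K 2 2 * swap2"
    by (simp_all add: e block_Theta)
qed

lemmas block_Theta_conj_simps = block_Theta_conj block_Theta_conj[unfolded One_nat_def]

lemma swap2_conj: "swap2 * Mat2 a b c d * swap2 = Mat2 d c b a"
  by (simp add: swap2_def)

lemma centre_split_Theta_conj:
  assumes "centre_split K"
  shows "centre_split (Theta * K * Theta)"
proof -
  have K: "K \<in> carrier_mat 6 6" using assms by (simp add: centre_split_def)
  show ?thesis
    using assms K Theta_carrier unfolding centre_split_def block_Theta_conj_simps[OF K] by simp
qed

lemma block_integrable_Theta_conj:
  assumes "centre_split K" "block_integrable K"
  shows "block_integrable (Theta * K * Theta)"
proof -
  have K: "K \<in> carrier_mat 6 6" "K * K = - 1\<^sub>m 6" using assms(2) by (simp_all add: block_integrable_def)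
  have "Theta * K * Theta * (Theta * K * Theta) = Theta * (K * K * Theta)"
    using K(1) Theta_carrier by (simp add: assoc_mult_mat[of _ 6 6 _ 6 _ 6] mult_carrier_mat)
  then have "Theta * K * Theta * (Theta * K * Theta) = - 1\<^sub>m 6"
    using K Theta_carrier Theta_square by simp
  moreover obtain z11 z12 z21 z22 where "block K 2 2 = Mat2 z11 z12 z21 z22" by (cases "block K 2 2")
  ultimately show ?thesis
    using assms K Theta_carrier unfolding block_integrable_def block_Theta_conj_simps[OF K(1)]
    by (auto simp: centre_split_def swap2_conj)
qed

lemma first_equiv_Theta_conj_of_second_equiv:
  assumes "second_equiv J K" "J \<in> carrier_mat 6 6"
  shows "first_equiv J (Theta * K * Theta)"
proof -
  obtain F Q where F: "first_kind F" and Q: "Q \<in> carrier_mat 6 6"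
    "Theta * F * Q = 1\<^sub>m 6" "Q * (Theta * F) = 1\<^sub>m 6" and K: "K = Theta * F * J * Q"
    using assms(1) unfolding second_equiv_def second_kind_def equiv_by_def by blast
  have Fc: "F \<in> carrier_mat 6 6" using first_kind_blocks(1)[OF F] .
  note T = Theta_carrier
  have "Theta * K * Theta = (Theta * Theta) * F * J * (Q * Theta)"
    using K T Fc Q(1) assms by (simp add: assoc_mult_mat[of _ 6 6 _ 6 _ 6] mult_carrier_mat)
  then have "Theta * K * Theta = F * J * (Q * Theta)" using Theta_square Fc by simp
  moreover have "F * (Q * Theta) = 1\<^sub>m 6"
  proof -
    have "F * (Q * Theta) = Theta * (Theta * F * Q * Theta)"
      using T Fc Q(1) by (simp add: assoc_mult_mat[of _ 6 6 _ 6 _ 6] mult_carrier_mat)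
    then show ?thesis using Q(2) T Theta_square by simp
  qed
  moreover have "Q * Theta * F = 1\<^sub>m 6"
    using Q(1,3) T Fc by (simp add: assoc_mult_mat[of _ 6 6 _ 6 _ 6] mult_carrier_mat)
  ultimately show ?thesis
    using F Q(1) T unfolding first_equiv_def equiv_by_def by (intro exI[of _ F]) auto
qed

lemma second_equiv_of_first_equiv_Theta_conj:
  assumes "first_equiv J (Theta * K * Theta)" "J \<in> carrier_mat 6 6" "K \<in> carrier_mat 6 6"
  shows "second_equiv J K"
proof -
  obtain F Q where F: "first_kind F" and Q: "Q \<in> carrier_mat 6 6" "F * Q = 1\<^sub>m 6" "Q * F = 1\<^sub>m 6"
    and K: "Theta * K * Theta = F * J * Q"
    using assms(1) unfolding first_equiv_def equiv_by_def by blast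
  have Fc: "F \<in> carrier_mat 6 6" using first_kind_blocks(1)[OF F] .
  note T = Theta_carrier
  have "K = (Theta * Theta) * K * (Theta * Theta)" using Theta_square assms(3) by simp
  also have "\<dots> = Theta * (Theta * K * Theta) * Theta"
    using T assms(3) by (simp add: assoc_mult_mat[of _ 6 6 _ 6 _ 6] mult_carrier_mat)
  also have "\<dots> = Theta * F * J * (Q * Theta)"
    unfolding K using T Fc Q(1) assms(2) by (simp add: assoc_mult_mat[of _ 6 6 _ 6 _ 6] mult_carrier_mat)
  finally have "K = Theta * F * J * (Q * Theta)" .
  moreover have "Theta * F * (Q * Theta) = 1\<^sub>m 6"
  proof -
    have "Theta * F * (Q * Theta) = Theta * (F * Q) * Theta"
      using T Fc Q(1) by (simp add: assoc_mult_mat[of _ 6 6 _ 6 _ 6] mult_carrier_mat)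
    then show ?thesis using Q(2) T Theta_square by simp
  qed
  moreover have "Q * Theta * (Theta * F) = 1\<^sub>m 6"
  proof -
    have "Q * Theta * (Theta * F) = Q * (Theta * Theta) * F"
      using T Fc Q(1) by (simp add: assoc_mult_mat[of _ 6 6 _ 6 _ 6] mult_carrier_mat)
    then show ?thesis using Q(3) Theta_square Q(1) by simp
  qed
  ultimately show ?thesis
    using F Q(1) T unfolding second_equiv_def second_kind_def equiv_by_def
    by (intro exI[of _ "Theta * F"]) auto
qed

lemma second_equiv_iff_first_equiv_Theta_conj:
  assumes "J \<in> carrier_mat 6 6" "K \<in> carrier_mat 6 6"
  shows "second_equiv J K \<longleftrightarrow> first_equiv J (Theta * K * Theta)"
  using first_equiv_Theta_conj_of_second_equiv second_equiv_of_first_equiv_Theta_conj assms by blast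

section \<open>Reduction to the lower right block\<close>

text \<open>When tr S \<noteq> 0, the relations P Q = - Q S and R Q = -1 - S^2 from J^2 = -1 together with the
  Nijenhuis relations express the centre block through S and det Q alone.\<close>

lemma centre_block_determined:
  assumes J: "block_integrable J" and S: "S = block J 1 1" and Q: "Q = block J 0 1" and tr: "tr2 S \<noteq> 0"
  shows "det2 Q \<noteq> 0"
    "block J 2 2 = Mat2 (- (det2 S - 1) / tr2 S) (det2 Q / tr2 S)
                        (- det2 (-1 - S * S) / (det2 Q * tr2 S)) ((det2 S - 1) / tr2 S)"
proof -
  have Jc: "J \<in> carrier_mat 6 6" "J * J = - 1\<^sub>m 6" "block J 0 2 = 0" "block J 1 2 = 0"
    using J by (simp_all add: block_integrable_def)
  note sq = square_eq_minus_one_blocks[OF Jc]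
  define P where "P = block J 0 0"
  define R where "R = block J 1 0"
  obtain z11 z12 z21 z22 where Z: "block J 2 2 = Mat2 z11 z12 z21 z22" by (cases "block J 2 2")
  have N: "det2 P - 1 = tr2 P * z11" "det2 R = tr2 P * z21" "det2 Q = tr2 S * z12" "det2 S - 1 = tr2 S * z22"
    using J Z by (simp_all add: block_integrable_def P_def R_def Q S)
  have "z12 \<noteq> 0" using complex_structure2_entries(3)[OF sq(5)[unfolded Z]] .
  then show dQ: "det2 Q \<noteq> 0" using N(3) tr by simp
  have "P * Q = - (Q * S)" using sq(2) by (simp add: P_def Q S eq_neg_iff_add_eq_0)
  then have "Q * (- S) = P * Q" by simp
  then have P: "det2 P = det2 S" "tr2 P = - tr2 S" using similar2_det_tr[OF dQ, of "- S" P] by simp_all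
  have "R * Q = -1 - S * S" using sq(4) by (simp add: R_def Q S algebra_simps eq_diff_eq)
  then have "det2 R * det2 Q = det2 (-1 - S * S)" by (metis det2_mult)
  then show "block J 2 2 = Mat2 (- (det2 S - 1) / tr2 S) (det2 Q / tr2 S)
                        (- det2 (-1 - S * S) / (det2 Q * tr2 S)) ((det2 S - 1) / tr2 S)"
    using N P tr dQ unfolding Z by (simp add: field_simps)
qed

lemma top_intertwiner_of_similar_lower_right:
  assumes Q: "det2 Q \<noteq> 0" and BS: "B2 * S = S' * B2"
    and PQ: "P * Q = - (Q * S)" "P' * Q' = - (Q' * S')"
    and RQ: "R * Q = -1 - S * S" "R' * Q' = -1 - S' * S'"
  shows "Q' * B2 * inv2 Q * P = P' * (Q' * B2 * inv2 Q)" "Q' * B2 * inv2 Q * Q = Q' * B2"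
    "B2 * R = R' * (Q' * B2 * inv2 Q)"
proof -
  define B1 where "B1 = Q' * B2 * inv2 Q"
  have QB: "B1 * Q = Q' * B2" using Q by (simp add: B1_def mult.assoc inv2_left)
  then show "Q' * B2 * inv2 Q * Q = Q' * B2" by (simp add: B1_def)
  have "B1 * P = P' * B1"
  proof (rule mult2_right_cancel[OF Q])
    have "B1 * P * Q = - (B1 * Q * S)" by (simp add: mult.assoc PQ(1))
    also have "\<dots> = - (Q' * S' * B2)" by (simp add: QB BS mult.assoc)
    also have "\<dots> = P' * Q' * B2" by (simp add: PQ(2))
    finally show "B1 * P * Q = P' * B1 * Q" by (simp add: QB mult.assoc)
  qed
  then show "Q' * B2 * inv2 Q * P = P' * (Q' * B2 * inv2 Q)" by (simp add: B1_def)
  have "B2 * R = R' * B1"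
  proof (rule mult2_right_cancel[OF Q])
    have "B2 * (S * S) = S' * S' * B2" using BS by (metis mult.assoc)
    then have "B2 * R * Q = R' * Q' * B2" by (simp add: mult.assoc RQ algebra_simps)
    then show "B2 * R * Q = R' * B1 * Q" by (simp add: QB mult.assoc)
  qed
  then show "B2 * R = R' * (Q' * B2 * inv2 Q)" by (simp add: B1_def)
qed

lemma first_equiv_of_similar_lower_right:
  assumes J: "block_integrable J" and K: "block_integrable K" "centre_split K"
    and tr: "tr2 (block J 1 1) \<noteq> 0"
    and B2: "det2 B2 \<noteq> 0" "B2 * block J 1 1 = block K 1 1 * B2"
  shows "first_equiv J K"
proof -
  have Jc: "J \<in> carrier_mat 6 6" "J * J = - 1\<^sub>m 6" "block J 0 2 = 0" "block J 1 2 = 0"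
    using J by (simp_all add: block_integrable_def)
  have Kc: "K \<in> carrier_mat 6 6" "K * K = - 1\<^sub>m 6" "block K 0 2 = 0" "block K 1 2 = 0"
    using K by (simp_all add: block_integrable_def)
  note sqJ = square_eq_minus_one_blocks[OF Jc] and sqK = square_eq_minus_one_blocks[OF Kc]
  define S where "S = block J 1 1"
  define S' where "S' = block K 1 1"
  have BS: "B2 * S = S' * B2" using B2(2) by (simp add: S_def S'_def)
  have S': "det2 S' = det2 S" "tr2 S' = tr2 S" using similar2_det_tr[OF B2(1) BS] by simp_all
  have "B2 * (S * S) = S' * S' * B2" using BS by (metis mult.assoc)
  then have "B2 * (-1 - S * S) = (-1 - S' * S') * B2" by (simp add: algebra_simps)
  then have S'S': "det2 (-1 - S' * S') = det2 (-1 - S * S)" using similar2_det_tr(1)[OF B2(1)] by simp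
  have trS: "tr2 S \<noteq> 0" using tr by (simp add: S_def)
  note ZJ = centre_block_determined[OF J S_def refl trS]
  note ZK = centre_block_determined[OF K(1) S'_def refl, unfolded S' S'S', OF trS]
  define B1 where "B1 = block K 0 1 * B2 * inv2 (block J 0 1)"
  have "block J 0 0 * block J 0 1 = - (block J 0 1 * S)" "block K 0 0 * block K 0 1 = - (block K 0 1 * S')"
    using sqJ(2) sqK(2) by (simp_all add: S_def S'_def eq_neg_iff_add_eq_0)
  moreover have "block J 1 0 * block J 0 1 = -1 - S * S" "block K 1 0 * block K 0 1 = -1 - S' * S'"
    using sqJ(4) sqK(4) by (simp_all add: S_def S'_def algebra_simps eq_diff_eq)
  ultimately have "B1 * block J 0 0 = block K 0 0 * B1" "B1 * block J 0 1 = block K 0 1 * B2"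
    "B2 * block J 1 0 = block K 1 0 * B1"
    unfolding B1_def by (rule top_intertwiner_of_similar_lower_right[OF ZJ(1) BS])+
  moreover have "det_diag B1 B2 * block J 2 2 = block K 2 2 * det_diag B1 B2"
    unfolding ZJ(2) ZK(2) using ZJ(1) ZK(1) trS B2(1)
    by (simp add: det_diag_def B1_def det2_mult det2_inv2 field_simps)
  ultimately have "block_intertwiner B1 B2 J K"
    using ZK(1) ZJ(1) B2 unfolding block_intertwiner_def by (simp add: B1_def det2_mult det2_inv2)
  then show ?thesis using first_equiv_of_block_intertwiner[OF Jc K(2)] by blast
qed

section \<open>The normal forms\<close>

lemma power2_plus_one_pos: "(x::real)^2 + 1 > 0"
  by (simp add: add_nonneg_pos)

lemma S_t_carrier: "S_t e x \<in> carrier_mat 6 6"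
  unfolding S_t_def by (rule mat_of_rows_list_carrier) simp

lemma D_t_carrier: "D_t x \<in> carrier_mat 6 6"
  unfolding D_t_def by (rule mat_of_rows_list_carrier) simp

lemma T_t_carrier: "T_t a b \<in> carrier_mat 6 6"
  unfolding T_t_def by (rule mat_of_rows_list_carrier) simp

lemma S_t_blocks:
  "block (S_t e x) 0 0 = rot" "block (S_t e x) 0 1 = 0" "block (S_t e x) 0 2 = 0"
  "block (S_t e x) 1 0 = 0" "block (S_t e x) 1 1 = rot" "block (S_t e x) 1 2 = 0"
  "block (S_t e x) 2 0 = 0" "block (S_t e x) 2 1 = 0" "block (S_t e x) 2 2 = Mat2 x (-e*(x^2+1)) e (-x)"
  by (simp_all add: block_simps S_t_def mat_of_rows_list_index rot_def zero_mat2_def)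

lemma D_t_blocks:
  "block (D_t x) 0 0 = Mat2 x 0 0 x" "block (D_t x) 0 1 = Mat2 (-(x^2+1)) 0 0 (-(x^2+1))"
  "block (D_t x) 0 2 = 0" "block (D_t x) 1 0 = 1" "block (D_t x) 1 1 = Mat2 (-x) 0 0 (-x)"
  "block (D_t x) 1 2 = 0" "block (D_t x) 2 0 = 0" "block (D_t x) 2 1 = 0"
  "block (D_t x) 2 2 = Mat2 ((x^2-1)/(2*x)) (-((x^2+1)^2)/(2*x)) (1/(2*x)) ((1-x^2)/(2*x))"
  by (simp_all add: block_simps D_t_def mat_of_rows_list_index zero_mat2_def one_mat2_def)

lemma T_t_blocks:
  "block (T_t a b) 0 0 = Mat2 0 (-b*a) 1 (-a)"
  "block (T_t a b) 0 1 = Mat2 (-b*a) (b*a-1) (-(a^2+1-b*a)/a) a" "block (T_t a b) 0 2 = 0"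
  "block (T_t a b) 1 0 = Mat2 0 a 1 0" "block (T_t a b) 1 1 = Mat2 a (-a) b 0" "block (T_t a b) 1 2 = 0"
  "block (T_t a b) 2 0 = 0" "block (T_t a b) 2 1 = 0"
  "block (T_t a b) 2 2 = Mat2 (-(b*a-1)/a) (-((b*a-2)*b*a+a^2+1)/(a^2)) 1 ((b*a-1)/a)"
  by (simp_all add: block_simps T_t_def mat_of_rows_list_index zero_mat2_def)

lemmas block_S_t = S_t_blocks S_t_blocks[unfolded One_nat_def]
lemmas block_D_t = D_t_blocks D_t_blocks[unfolded One_nat_def]
lemmas block_T_t = T_t_blocks T_t_blocks[unfolded One_nat_def]

lemma centre_split_S_t: "centre_split (S_t e x)"
  by (simp add: centre_split_def S_t_carrier block_S_t)

lemma centre_split_D_t: "centre_split (D_t x)"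
  by (simp add: centre_split_def D_t_carrier block_D_t)

lemma centre_split_T_t: "centre_split (T_t a b)"
  by (simp add: centre_split_def T_t_carrier block_T_t)

lemma block_integrable_S_t:
  assumes "e \<in> {1, -1}"
  shows "block_integrable (S_t e x)"
proof -
  have "e * e = 1" using assms by auto
  then have "S_t e x * S_t e x = - 1\<^sub>m 6"
    by (intro centre_split_square_eq_minus_one centre_split_S_t)
      (simp_all add: block_S_t rot_def one_mat2_def power2_eq_square algebra_simps)
  then show ?thesis
    by (simp add: block_integrable_def S_t_carrier block_S_t rot_def)
qed

lemma block_integrable_D_t:
  assumes "x \<noteq> 0"
  shows "block_integrable (D_t x)"
proof -
  have "D_t x * D_t x = - 1\<^sub>m 6"
    using assms by (intro centre_split_square_eq_minus_one centre_split_D_t)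
      (simp_all add: block_D_t one_mat2_def zero_mat2_def field_simps power2_eq_square)
  then show ?thesis
    using assms by (simp add: block_integrable_def D_t_carrier block_D_t field_simps power2_eq_square)
qed

lemma block_integrable_T_t:
  assumes "a \<noteq> 0"
  shows "block_integrable (T_t a b)"
proof -
  have "T_t a b * T_t a b = - 1\<^sub>m 6"
    using assms by (intro centre_split_square_eq_minus_one centre_split_T_t)
      (simp_all add: block_T_t one_mat2_def zero_mat2_def field_simps power2_eq_square)
  then show ?thesis
    using assms by (simp add: block_integrable_def T_t_carrier block_T_t field_simps power2_eq_square)
qed

section \<open>Existence of a normal form\<close>

text \<open>Both diagonal blocks are conjugated to the rotation; rescaling B2 by a positive factor brings the
  (2,1) entry of the centre block to \<plusminus>1, the sign e being an invariant.\<close>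

lemma first_equiv_S_t_of_complex_diagonal:
  assumes J: "J \<in> carrier_mat 6 6" "J * J = - 1\<^sub>m 6" "block J 0 2 = 0" "block J 1 2 = 0"
    and Q: "block J 0 1 = 0" and R: "block J 1 0 = 0"
    and PP: "block J 0 0 * block J 0 0 = -1" and SS: "block J 1 1 * block J 1 1 = -1"
  shows "\<exists>K \<in> S_fam. first_equiv J K"
proof -
  note ZZ = square_eq_minus_one_blocks(5)[OF J]
  obtain p1 p2 p3 p4 where P: "block J 0 0 = Mat2 p1 p2 p3 p4" by (cases "block J 0 0")
  obtain s1 s2 s3 s4 where S: "block J 1 1 = Mat2 s1 s2 s3 s4" by (cases "block J 1 1")
  obtain z1 z2 z3 z4 where Z: "block J 2 2 = Mat2 z1 z2 z3 z4" by (cases "block J 2 2")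
  note cP = complex_structure2_conj_rot[OF PP[unfolded P]]
  note cS = complex_structure2_conj_rot[OF SS[unfolded S]]
  note cZ = complex_structure2_entries[OF ZZ[unfolded Z]]
  define t where "t = s3 / (z3 * p3)"
  have t0: "t \<noteq> 0" using cP(2) cS(2) cZ(4) by (simp add: t_def)
  define e :: real where "e = (if t > 0 then 1 else -1)"
  define m where "m = e * t"
  have m0: "m > 0" using t0 by (auto simp: m_def e_def)
  have e: "e * e = 1" "e \<in> {1, -1}" by (auto simp: e_def)
  define B1 where "B1 = inv2 (Mat2 1 p1 0 p3)"
  define B2 where "B2 = smult2 (sqrt m) (inv2 (Mat2 1 s1 0 s3))"
  have dB1: "det2 B1 = 1 / p3" using cP(2) by (simp add: B1_def det2_inv2)
  have dB2: "det2 B2 = m / s3" using cS(2) m0 by (simp add: B2_def det2_smult2 det2_inv2)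
  have z2: "z2 = - (z1 * z1 + 1) / z3" using cZ(2,4) by (simp add: field_simps)
  have "block_intertwiner B1 B2 J (S_t e z1)"
    unfolding block_intertwiner_def
  proof (intro conjI)
    show "det2 B1 \<noteq> 0" "det2 B2 \<noteq> 0" using dB1 dB2 cP(2) cS(2) m0 by simp_all
    show "B1 * block J 0 0 = block (S_t e z1) 0 0 * B1" using cP(1) by (simp add: P B1_def block_S_t)
    show "B1 * block J 0 1 = block (S_t e z1) 0 1 * B2" "B2 * block J 1 0 = block (S_t e z1) 1 0 * B1"
      using Q R by (simp_all add: block_S_t)
    have "B2 * block J 1 1 = smult2 (sqrt m) (inv2 (Mat2 1 s1 0 s3) * Mat2 s1 s2 s3 s4)"
      by (simp only: B2_def S smult2_mult_left)
    also have "\<dots> = rot * B2" by (simp only: cS(1) B2_def smult2_mult_right)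
    finally show "B2 * block J 1 1 = block (S_t e z1) 1 1 * B2" by (simp add: block_S_t)
    show "det_diag B1 B2 * block J 2 2 = block (S_t e z1) 2 2 * det_diag B1 B2"
      unfolding Z det_diag_def dB1 dB2 using cP(2) cS(2) cZ(4) e(1) cZ(1)
      by (simp add: block_S_t m_def t_def z2 field_simps power2_eq_square)
  qed
  then have "first_equiv J (S_t e z1)"
    using first_equiv_of_block_intertwiner[OF J centre_split_S_t] by blast
  moreover have "S_t e z1 \<in> S_fam" using e(2) by (auto simp: S_fam_def)
  ultimately show ?thesis by blast
qed

lemma classify_trace_zero:
  assumes J: "block_integrable J" and tr: "tr2 (block J 1 1) = 0"
  shows "\<exists>K \<in> S_fam. first_equiv J K"
proof -
  have Jc: "J \<in> carrier_mat 6 6" "J * J = - 1\<^sub>m 6" "block J 0 2 = 0" "block J 1 2 = 0"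
    using J by (simp_all add: block_integrable_def)
  note sq = square_eq_minus_one_blocks[OF Jc]
  define P where "P = block J 0 0"
  define Q where "Q = block J 0 1"
  define R where "R = block J 1 0"
  define S where "S = block J 1 1"
  obtain z11 z12 z21 z22 where Z: "block J 2 2 = Mat2 z11 z12 z21 z22" by (cases "block J 2 2")
  have N: "det2 R = tr2 P * z21" "det2 Q = 0" "det2 S = 1"
    using J tr Z by (simp_all add: block_integrable_def P_def Q_def R_def S_def)
  have SS: "S * S = -1" using cayley_hamilton2[of S] tr N(3) by (simp add: S_def)
  have "Q * S = - (P * Q)" using sq(2) by (simp add: P_def Q_def S_def eq_neg_iff_add_eq_0 add.commute)
  then have Q0: "Q = 0" using singular_anti_intertwiner_eq_0[OF N(2) _ SS] by blast
  have PP: "P * P = -1" using sq(1) Q0 by (simp add: P_def Q_def)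
  obtain p1 p2 p3 p4 where "P = Mat2 p1 p2 p3 p4" by (cases P)
  then have "tr2 P = 0" using complex_structure2_entries(1)[of p1 p2 p3 p4] PP by simp
  then have "det2 R = 0" using N(1) by simp
  moreover have "R * P = - (S * R)" using sq(3) by (simp add: P_def R_def S_def eq_neg_iff_add_eq_0)
  ultimately have R0: "R = 0" using singular_anti_intertwiner_eq_0 PP by blast
  show ?thesis
    using first_equiv_S_t_of_complex_diagonal[OF Jc] Q0 R0 PP SS by (simp add: P_def Q_def R_def S_def)
qed

lemma classify_scalar:
  assumes J: "block_integrable J" and tr: "tr2 (block J 1 1) \<noteq> 0" and S: "is_scalar2 (block J 1 1)"
  shows "\<exists>K \<in> D_fam. first_equiv J K"
proof -
  obtain s where s: "block J 1 1 = Mat2 s 0 0 s" using S by (auto simp: is_scalar2_def)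
  have x0: "- s \<noteq> 0" using tr s by simp
  have "det2 (1::mat2) \<noteq> 0" "1 * block J 1 1 = block (D_t (- s)) 1 1 * 1"
    by (simp_all add: s s[unfolded One_nat_def] block_D_t)
  then have "first_equiv J (D_t (- s))"
    by (rule first_equiv_of_similar_lower_right[OF J block_integrable_D_t[OF x0] centre_split_D_t tr])
  moreover have "D_t (- s) \<in> D_fam" using x0 by (auto simp: D_fam_def)
  ultimately show ?thesis by blast
qed

lemma classify_non_scalar:
  assumes J: "block_integrable J" and tr: "tr2 (block J 1 1) \<noteq> 0" and S: "\<not> is_scalar2 (block J 1 1)"
  shows "\<exists>K \<in> T_fam. first_equiv J K"
proof -
  define a where "a = tr2 (block J 1 1)"
  define b where "b = det2 (block J 1 1) / a"
  define C where "C = Mat2 0 (- det2 (block J 1 1)) 1 (tr2 (block J 1 1))"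
  obtain W where W: "det2 W \<noteq> 0" "block J 1 1 * W = W * C"
    using non_scalar2_cyclic[OF S] unfolding C_def by blast
  define U where "U = Mat2 0 (-a) 1 0"
  have a0: "a \<noteq> 0" using tr by (simp add: a_def)
  have UC: "U * C = block (T_t a b) 1 1 * U"
    using a0 by (simp add: U_def C_def block_T_t a_def b_def field_simps)
  define B2 where "B2 = U * inv2 W"
  have dB2: "det2 B2 \<noteq> 0" using W(1) a0 by (simp add: B2_def det2_mult det2_inv2 U_def)
  have "B2 * block J 1 1 = U * (C * inv2 W)"
    using conj2_by_inv2[OF W] by (simp add: B2_def mult.assoc)
  also have "\<dots> = block (T_t a b) 1 1 * B2" using UC by (simp add: B2_def mult.assoc[symmetric])
  finally have "first_equiv J (T_t a b)"
    using first_equiv_of_similar_lower_right[OF J block_integrable_T_t[OF a0] centre_split_T_t tr dB2]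
    by blast
  moreover have "T_t a b \<in> T_fam" using a0 by (auto simp: T_fam_def)
  ultimately show ?thesis by blast
qed

theorem integrable_normal_form:
  assumes "integrable_cx J"
  shows "\<exists>K \<in> S_fam \<union> D_fam \<union> T_fam. first_equiv J K"
  using integrable_block_integrable[OF assms] classify_trace_zero classify_scalar classify_non_scalar
  by blast

section \<open>Equivalences between normal forms\<close>

lemma second_equiv_block_intertwiner:
  assumes "second_equiv J K" "centre_split J" "centre_split K"
  obtains B1 B2 where "block_intertwiner B1 B2 J (Theta * K * Theta)"
proof -
  have "J \<in> carrier_mat 6 6" "K \<in> carrier_mat 6 6" using assms(2,3) by (simp_all add: centre_split_def)
  then have "first_equiv J (Theta * K * Theta)" using assms(1) second_equiv_iff_first_equiv_Theta_conj by blast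
  then show ?thesis
    using first_equiv_block_intertwiner assms(2) centre_split_Theta_conj[OF assms(3)] that by blast
qed

lemma second_equiv_of_similar_lower_right:
  assumes J: "block_integrable J" and K: "block_integrable K" "centre_split K"
    and tr: "tr2 (block J 1 1) \<noteq> 0" and B: "det2 B \<noteq> 0" "B * block J 1 1 = block K 0 0 * B"
  shows "second_equiv J K"
proof -
  have Kc: "K \<in> carrier_mat 6 6" using K(2) by (simp add: centre_split_def)
  have "first_equiv J (Theta * K * Theta)"
    using first_equiv_of_similar_lower_right[OF J block_integrable_Theta_conj[OF K(2,1)]
        centre_split_Theta_conj[OF K(2)] tr B(1)] B(2)
    by (simp add: block_Theta_conj_simps[OF Kc])
  then show ?thesis
    using J Kc by (simp add: second_equiv_iff_first_equiv_Theta_conj block_integrable_def)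
qed

lemma S_t_first_equiv_iff:
  assumes e: "e \<in> {1, -1}" and e': "e' \<in> {1, -1}"
  shows "first_equiv (S_t e x) (S_t e' x') \<longleftrightarrow> e' = e \<and> x' = x"
proof
  assume "first_equiv (S_t e x) (S_t e' x')"
  then obtain B1 B2 where B: "block_intertwiner B1 B2 (S_t e x) (S_t e' x')"
    using first_equiv_block_intertwiner centre_split_S_t by blast
  then have "B1 * rot = rot * B1" "B2 * rot = rot * B2" "det2 B1 \<noteq> 0" "det2 B2 \<noteq> 0"
    by (simp_all add: block_intertwiner_def block_S_t)
  then have pos: "det2 B1 > 0" "det2 B2 > 0" using commutes_rot_det2_pos by blast+
  have centre: "x' = x" "det2 B2 * e = e' * det2 B1"
    using B by (auto simp: block_intertwiner_def block_S_t det_diag_def)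
  have "e' = e"
  proof (rule ccontr)
    assume "e' \<noteq> e"
    then have "e * (det2 B2 + det2 B1) = 0" using centre(2) e e' by (auto simp: algebra_simps)
    then show False using pos e by auto
  qed
  then show "e' = e \<and> x' = x" using centre(1) by simp
qed (use first_equiv_refl S_t_carrier in auto)

lemma S_t_second_equiv_iff:
  assumes e: "e \<in> {1, -1}" and e': "e' \<in> {1, -1}"
  shows "second_equiv (S_t e x) (S_t e' x') \<longleftrightarrow> e' = - e \<and> x' = - x"
proof
  assume "second_equiv (S_t e x) (S_t e' x')"
  then obtain B1 B2 where B: "block_intertwiner B1 B2 (S_t e x) (Theta * S_t e' x' * Theta)"
    using second_equiv_block_intertwiner centre_split_S_t by blast
  note B = B[unfolded block_intertwiner_def block_Theta_conj_simps[OF S_t_carrier]]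
  then have "B1 * rot = rot * B1" "B2 * rot = rot * B2" "det2 B1 \<noteq> 0" "det2 B2 \<noteq> 0"
    by (simp_all add: block_S_t)
  then have pos: "det2 B1 > 0" "det2 B2 > 0" using commutes_rot_det2_pos by blast+
  have "det2 B1 * x = - x' * det2 B1" "det2 B2 * e = - (e' * (x'^2 + 1)) * det2 B1"
    using B by (simp_all add: block_S_t det_diag_def swap2_conj)
  then have centre: "det2 B1 * (x + x') = 0" "det2 B2 * e = - (e' * (x'^2 + 1)) * det2 B1"
    by (simp_all add: algebra_simps)
  have "(x'^2 + 1) * det2 B1 > 0" using pos power2_plus_one_pos by simp
  have "e' = - e"
  proof (rule ccontr)
    assume "e' \<noteq> - e"
    then have "e * (det2 B2 + (x'^2 + 1) * det2 B1) = 0" using centre(2) e e' by (auto simp: algebra_simps)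
    then show False using pos \<open>(x'^2 + 1) * det2 B1 > 0\<close> e by auto
  qed
  then show "e' = - e \<and> x' = - x" using centre(1) pos by (simp add: add_eq_0_iff)
next
  assume "e' = - e \<and> x' = - x"
  moreover have "first_equiv (S_t e x) (Theta * S_t (- e) (- x) * Theta)"
  proof (rule first_equiv_of_block_intertwiner)
    note Sc = block_integrable_S_t[OF e, unfolded block_integrable_def]
    show "S_t e x \<in> carrier_mat 6 6" "S_t e x * S_t e x = - 1\<^sub>m 6"
      "block (S_t e x) 0 2 = 0" "block (S_t e x) 1 2 = 0" using Sc by simp_all
    show "centre_split (Theta * S_t (- e) (- x) * Theta)"
      by (rule centre_split_Theta_conj[OF centre_split_S_t])
    have "x^2 + 1 > (0::real)" by (rule power2_plus_one_pos)
    then show "block_intertwiner 1 (smult2 (sqrt (x^2 + 1)) 1) (S_t e x) (Theta * S_t (- e) (- x) * Theta)"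
      unfolding block_intertwiner_def block_Theta_conj_simps[OF S_t_carrier]
      by (simp add: block_S_t det2_smult2 det_diag_def swap2_def rot_def one_mat2_def algebra_simps)
  qed
  ultimately show "second_equiv (S_t e x) (S_t e' x')"
    using second_equiv_iff_first_equiv_Theta_conj S_t_carrier by blast
qed

lemma D_t_first_equiv_iff:
  assumes "x \<noteq> 0" "x' \<noteq> 0"
  shows "first_equiv (D_t x) (D_t x') \<longleftrightarrow> x' = x"
proof
  assume "first_equiv (D_t x) (D_t x')"
  then obtain B1 B2 where "block_intertwiner B1 B2 (D_t x) (D_t x')"
    using first_equiv_block_intertwiner centre_split_D_t by blast
  then have "det2 B1 \<noteq> 0" "B1 * Mat2 x 0 0 x = B1 * Mat2 x' 0 0 x'"
    by (simp_all add: block_intertwiner_def block_D_t scalar2_mult_commute)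
  then show "x' = x" using mult2_left_cancel by fastforce
qed (use first_equiv_refl D_t_carrier in auto)

lemma D_t_second_equiv_iff:
  assumes x: "x \<noteq> 0" and x': "x' \<noteq> 0"
  shows "second_equiv (D_t x) (D_t x') \<longleftrightarrow> x' = - x"
proof
  assume "second_equiv (D_t x) (D_t x')"
  then obtain B1 B2 where "block_intertwiner B1 B2 (D_t x) (Theta * D_t x' * Theta)"
    using second_equiv_block_intertwiner centre_split_D_t by blast
  then have "det2 B1 \<noteq> 0" "B1 * Mat2 x 0 0 x = B1 * Mat2 (- x') 0 0 (- x')"
    by (simp_all add: block_intertwiner_def block_Theta_conj_simps[OF D_t_carrier] block_D_t
        scalar2_mult_commute)
  then show "x' = - x" using mult2_left_cancel by fastforce
next
  assume "x' = - x"
  moreover have "second_equiv (D_t x) (D_t (- x))"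
    using x by (intro second_equiv_of_similar_lower_right[where B = 1]
        block_integrable_D_t centre_split_D_t) (simp_all add: block_D_t)
  ultimately show "second_equiv (D_t x) (D_t x')" by simp
qed

lemma T_t_first_equiv_iff:
  assumes "a \<noteq> 0" "a' \<noteq> 0"
  shows "first_equiv (T_t a b) (T_t a' b') \<longleftrightarrow> a' = a \<and> b' = b"
proof
  assume "first_equiv (T_t a b) (T_t a' b')"
  then obtain B1 B2 where "block_intertwiner B1 B2 (T_t a b) (T_t a' b')"
    using first_equiv_block_intertwiner centre_split_T_t by blast
  then have "det2 B1 \<noteq> 0" "B1 * block (T_t a b) 0 0 = block (T_t a' b') 0 0 * B1"
    by (simp_all add: block_intertwiner_def)
  from similar2_det_tr[OF this] show "a' = a \<and> b' = b" using assms by (simp add: block_T_t)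
qed (use first_equiv_refl T_t_carrier in auto)

lemma T_t_second_equiv_iff:
  assumes a: "a \<noteq> 0" and a': "a' \<noteq> 0"
  shows "second_equiv (T_t a b) (T_t a' b') \<longleftrightarrow> a' = - a \<and> b' = - b"
proof
  assume "second_equiv (T_t a b) (T_t a' b')"
  then obtain B1 B2 where "block_intertwiner B1 B2 (T_t a b) (Theta * T_t a' b' * Theta)"
    using second_equiv_block_intertwiner centre_split_T_t by blast
  then have "det2 B1 \<noteq> 0" "B1 * block (T_t a b) 0 0 = block (T_t a' b') 1 1 * B1"
    by (simp_all add: block_intertwiner_def block_Theta_conj_simps[OF T_t_carrier])
  from similar2_det_tr[OF this] have "a' = - a" "b * a = a' * b'" by (simp_all add: block_T_t)
  then have "a' = - a" "a * (b + b') = 0" by (simp_all add: algebra_simps)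
  then show "a' = - a \<and> b' = - b" using a by (simp add: add_eq_0_iff)
next
  assume "a' = - a \<and> b' = - b"
  moreover have "second_equiv (T_t a b) (T_t (- a) (- b))"
    using a by (intro second_equiv_of_similar_lower_right[where B = "Mat2 0 1 (-1/a) 0"]
        block_integrable_T_t centre_split_T_t) (simp_all add: block_T_t field_simps)
  ultimately show "second_equiv (T_t a b) (T_t a' b')" by simp
qed

section \<open>Invariants separating the three families\<close>

definition top_degenerate :: "real mat \<Rightarrow> bool" where
  "top_degenerate J \<longleftrightarrow> det2 (block J 0 1) * det2 (block J 1 0) = 0"

definition scalar_diagonal :: "real mat \<Rightarrow> bool" where
  "scalar_diagonal J \<longleftrightarrow> is_scalar2 (block J 0 0) \<and> is_scalar2 (block J 1 1)"

lemma block_intertwiner_invariants: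
  assumes "block_intertwiner B1 B2 J K"
  shows "top_degenerate J \<longleftrightarrow> top_degenerate K" "scalar_diagonal J \<longleftrightarrow> scalar_diagonal K"
proof -
  have B: "det2 B1 \<noteq> 0" "det2 B2 \<noteq> 0"
    "B1 * block J 0 0 = block K 0 0 * B1" "B1 * block J 0 1 = block K 0 1 * B2"
    "B2 * block J 1 0 = block K 1 0 * B1" "B2 * block J 1 1 = block K 1 1 * B2"
    using assms by (simp_all add: block_intertwiner_def)
  have "det2 B1 * det2 (block J 0 1) = det2 (block K 0 1) * det2 B2"
    "det2 B2 * det2 (block J 1 0) = det2 (block K 1 0) * det2 B1"
    using B(4,5) by (metis det2_mult)+
  then show "top_degenerate J \<longleftrightarrow> top_degenerate K"
    using B(1,2) unfolding top_degenerate_def by (metis mult_eq_0_iff)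
  show "scalar_diagonal J \<longleftrightarrow> scalar_diagonal K"
    unfolding scalar_diagonal_def using similar2_is_scalar2 B(1-3,6) by blast
qed

lemma equiv_invariants:
  assumes "first_equiv J K \<or> second_equiv J K" "centre_split J" "centre_split K"
  shows "top_degenerate J \<longleftrightarrow> top_degenerate K" "scalar_diagonal J \<longleftrightarrow> scalar_diagonal K"
proof -
  have K: "K \<in> carrier_mat 6 6" using assms(3) by (simp add: centre_split_def)
  have Theta_conj: "top_degenerate (Theta * K * Theta) \<longleftrightarrow> top_degenerate K"
    "scalar_diagonal (Theta * K * Theta) \<longleftrightarrow> scalar_diagonal K"
    unfolding top_degenerate_def scalar_diagonal_def block_Theta_conj_simps[OF K] by auto
  from assms(1) obtain B1 B2 where
    "block_intertwiner B1 B2 J K \<or> block_intertwiner B1 B2 J (Theta * K * Theta)"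
    using first_equiv_block_intertwiner second_equiv_block_intertwiner assms(2,3) by metis
  then show "top_degenerate J \<longleftrightarrow> top_degenerate K" "scalar_diagonal J \<longleftrightarrow> scalar_diagonal K"
    using block_intertwiner_invariants Theta_conj by blast+
qed

lemma S_t_invariants: "top_degenerate (S_t e x)"
  by (simp add: top_degenerate_def block_S_t)

lemma D_t_invariants: "\<not> top_degenerate (D_t x)" "scalar_diagonal (D_t x)"
proof -
  have "x^2 + 1 \<noteq> (0::real)" using power2_plus_one_pos[of x] by simp
  then show "\<not> top_degenerate (D_t x)" by (simp add: top_degenerate_def block_D_t one_mat2_def)
  show "scalar_diagonal (D_t x)" by (auto simp: scalar_diagonal_def is_scalar2_def block_D_t)
qed

lemma T_t_invariants:
  assumes "a \<noteq> 0"
  shows "\<not> top_degenerate (T_t a b)" "\<not> scalar_diagonal (T_t a b)"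
proof -
  have "det2 (block (T_t a b) 0 1) = - ((b*a - 1)^2 + a^2) / a"
    using assms by (simp add: block_T_t field_simps power2_eq_square)
  moreover have "(b*a - 1)^2 + a^2 > 0" using assms by (simp add: add_nonneg_pos)
  ultimately show "\<not> top_degenerate (T_t a b)" using assms by (simp add: top_degenerate_def block_T_t)
  show "\<not> scalar_diagonal (T_t a b)" by (simp add: scalar_diagonal_def is_scalar2_def block_T_t)
qed

theorem normal_families_inequivalent:
  assumes "F1 \<in> {S_fam, D_fam, T_fam}" "F2 \<in> {S_fam, D_fam, T_fam}" "F1 \<noteq> F2" "A \<in> F1" "B \<in> F2"
  shows "\<not> first_equiv A B \<and> \<not> second_equiv A B"
proof
  define kind :: "real mat \<Rightarrow> bool \<times> bool" where
    "kind J = (top_degenerate J, scalar_diagonal J)" for J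
  have family: "J \<in> S_fam \<Longrightarrow> fst (kind J)"
    "J \<in> D_fam \<Longrightarrow> kind J = (False, True)" "J \<in> T_fam \<Longrightarrow> kind J = (False, False)"
    "J \<in> S_fam \<union> D_fam \<union> T_fam \<Longrightarrow> centre_split J" for J
    by (auto simp: kind_def S_fam_def D_fam_def T_fam_def S_t_invariants D_t_invariants T_t_invariants
        centre_split_S_t centre_split_D_t centre_split_T_t)
  have "kind A \<noteq> kind B"
    using assms family(1-3) by (auto simp: kind_def)
  moreover have "kind A = kind B" if "first_equiv A B \<or> second_equiv A B"
    using equiv_invariants[OF that] family(4) assms by (auto simp: kind_def)
  ultimately show "\<not> first_equiv A B" "\<not> second_equiv A B" by blast+
qed

theorem lemma5:
  shows
  "(\<forall>J. integrable_cx J \<longrightarrow>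
      (\<exists>P. first_kind P \<and> (\<exists>K \<in> S_fam \<union> D_fam \<union> T_fam. equiv_by P J K)))
   \<and> (\<forall>e e' x x'. e \<in> {1,-1} \<longrightarrow> e' \<in> {1,-1} \<longrightarrow>
        (first_equiv (S_t e x) (S_t e' x') \<longleftrightarrow> e' = e \<and> x' = x) \<and>
        (second_equiv (S_t e x) (S_t e' x') \<longleftrightarrow> e' = -e \<and> x' = -x))
   \<and> (\<forall>x x'. x \<noteq> 0 \<longrightarrow> x' \<noteq> 0 \<longrightarrow>
        (first_equiv (D_t x) (D_t x') \<longleftrightarrow> x' = x) \<and>
        (second_equiv (D_t x) (D_t x') \<longleftrightarrow> x' = -x))
   \<and> (\<forall>a b a' b'. a \<noteq> 0 \<longrightarrow> a' \<noteq> 0 \<longrightarrow>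
        (first_equiv (T_t a b) (T_t a' b') \<longleftrightarrow> a' = a \<and> b' = b) \<and>
        (second_equiv (T_t a b) (T_t a' b') \<longleftrightarrow> a' = -a \<and> b' = -b))
   \<and> (\<forall>F1 \<in> {S_fam, D_fam, T_fam}. \<forall>F2 \<in> {S_fam, D_fam, T_fam}. F1 \<noteq> F2 \<longrightarrow>
        (\<forall>A \<in> F1. \<forall>B \<in> F2. \<not> first_equiv A B \<and> \<not> second_equiv A B))"
proof -
  have "\<forall>J. integrable_cx J \<longrightarrow> (\<exists>P. first_kind P \<and> (\<exists>K \<in> S_fam \<union> D_fam \<union> T_fam. equiv_by P J K))"
    using integrable_normal_form unfolding first_equiv_def by blast
  moreover have "\<forall>F1 \<in> {S_fam, D_fam, T_fam}. \<forall>F2 \<in> {S_fam, D_fam, T_fam}. F1 \<noteq> F2 \<longrightarrow>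
      (\<forall>A \<in> F1. \<forall>B \<in> F2. \<not> first_equiv A B \<and> \<not> second_equiv A B)"
    using normal_families_inequivalent by blast
  ultimately show ?thesis
    by (simp add: S_t_first_equiv_iff S_t_second_equiv_iff D_t_first_equiv_iff D_t_second_equiv_iff
        T_t_first_equiv_iff T_t_second_equiv_iff)
qed

end
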